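(* Let $\pi$ be the degree sequence of a tree with boundary, let $\mathcal{T}_\pi$ be the class of trees with boundary with degree sequence $\pi$, and let $G=(V,E)\in\mathcal{T}_\pi$. Then there exists an SLO$^\ast$-tree $G^\ast=(V,E^\ast)\in\mathcal{T}_\pi$ with $\lambda(G^\ast)\le\lambda(G)$.
   Context: A tree with boundary is a finite tree $G=(V,E)$ whose vertex set is partitioned into the set $\partial V$ of boundary vertices, which are exactly the vertices of degree $1$, and the set $V_0$ of interior vertices, which are exactly the vertices of degree at least $2$; both sets are nonempty. Its degree sequence is the multiset of vertex degrees. The Dirichlet operator $\Delta_0$ is the principal submatrix of the Laplacian $D-A$ indexed by $V_0$; $\lambda(G)$ is its smallest eigenvalue. For a chosen root $v_0$, $h(v)=\mathrm{dist}(v,v_0)$; if $v,w$ are adjacent with $h(w)=h(v)+1$, $w$ is a child of $v$. A total order $\prec$ on $V$ is an SLO-ordering for root $v_0$ if: (S1) $v\prec w$ implies $h(v)\le h(w)$; (S2) if $v_1\prec v_2$ then every child of $v_1$ precedes every child of $v_2$; (S3) if $v\prec w$ and $v\in\partial V$ then $w\in\partial V$. It is an SLO$^\ast$-ordering if additionally (S4) for interior vertices $v\prec w$ implies $d_v\le d_w$ ($d_v$ the degree). An SLO$^\ast$-tree is a tree with boundary admitting an SLO$^\ast$-ordering for some root. *)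

theory Defs
  imports Complex_Main "HOL-Library.Multiset"
begin

definition simple_graph :: "'a set \<Rightarrow> 'a set set \<Rightarrow> bool" where
  "simple_graph V E \<longleftrightarrow> finite V \<and>
     (\<forall>e\<in>E. \<exists>v w. e = {v, w} \<and> v \<noteq> w \<and> v \<in> V \<and> w \<in> V)"

definition deg :: "'a set set \<Rightarrow> 'a \<Rightarrow> nat" where
  "deg E v = card {w. {v, w} \<in> E}"

definition is_walk :: "'a set set \<Rightarrow> 'a list \<Rightarrow> bool" where
  "is_walk E ps \<longleftrightarrow> ps \<noteq> [] \<and> (\<forall>i. Suc i < length ps \<longrightarrow> {ps ! i, ps ! Suc i} \<in> E)"

definition connected_graph :: "'a set \<Rightarrow> 'a set set \<Rightarrow> bool" where
  "connected_graph V E \<longleftrightarrow>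
     (\<forall>v\<in>V. \<forall>w\<in>V. \<exists>ps. is_walk E ps \<and> hd ps = v \<and> last ps = w)"

definition is_cycle :: "'a set set \<Rightarrow> 'a list \<Rightarrow> bool" where
  "is_cycle E cs \<longleftrightarrow> length cs \<ge> 3 \<and> distinct cs \<and>
     (\<forall>i < length cs. {cs ! i, cs ! ((i + 1) mod length cs)} \<in> E)"

definition is_tree :: "'a set \<Rightarrow> 'a set set \<Rightarrow> bool" where
  "is_tree V E \<longleftrightarrow> simple_graph V E \<and> V \<noteq> {} \<and> connected_graph V E \<and>
     \<not> (\<exists>cs. set cs \<subseteq> V \<and> is_cycle E cs)"

definition boundary :: "'a set \<Rightarrow> 'a set set \<Rightarrow> 'a set" where
  "boundary V E = {v \<in> V. deg E v = 1}"

definition interior :: "'a set \<Rightarrow> 'a set set \<Rightarrow> 'a set" where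
  "interior V E = {v \<in> V. deg E v \<ge> 2}"

definition tree_with_boundary :: "'a set \<Rightarrow> 'a set set \<Rightarrow> bool" where
  "tree_with_boundary V E \<longleftrightarrow> is_tree V E \<and>
     V = boundary V E \<union> interior V E \<and>
     boundary V E \<noteq> {} \<and> interior V E \<noteq> {}"

definition degree_sequence :: "'a set \<Rightarrow> 'a set set \<Rightarrow> nat multiset" where
  "degree_sequence V E = image_mset (deg E) (mset_set V)"

text \<open>Dirichlet operator: principal submatrix of the Laplacian D - A indexed by
  the interior vertices, acting on functions on the interior.\<close>
definition dirichlet_op :: "'a set \<Rightarrow> 'a set set \<Rightarrow> ('a \<Rightarrow> real) \<Rightarrow> 'a \<Rightarrow> real" where
  "dirichlet_op V E x v =
     real (deg E v) * x v - (\<Sum>w\<in>{w \<in> interior V E. {v, w} \<in> E}. x w)"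

definition dirichlet_eigenvalues :: "'a set \<Rightarrow> 'a set set \<Rightarrow> real set" where
  "dirichlet_eigenvalues V E = {\<mu>. \<exists>x. (\<exists>v\<in>interior V E. x v \<noteq> 0) \<and>
      (\<forall>v\<in>interior V E. dirichlet_op V E x v = \<mu> * x v)}"

definition lambda_min :: "'a set \<Rightarrow> 'a set set \<Rightarrow> real" where
  "lambda_min V E = Min (dirichlet_eigenvalues V E)"

definition gdist :: "'a set set \<Rightarrow> 'a \<Rightarrow> 'a \<Rightarrow> nat" where
  "gdist E v w = (LEAST n. \<exists>ps. is_walk E ps \<and> length ps = Suc n \<and> hd ps = v \<and> last ps = w)"

definition is_child :: "'a set set \<Rightarrow> 'a \<Rightarrow> 'a \<Rightarrow> 'a \<Rightarrow> bool" where
  "is_child E v0 v w \<longleftrightarrow> {v, w} \<in> E \<and> gdist E w v0 = gdist E v v0 + 1"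

text \<open>A total order on V given by a list enumerating V without repetition.\<close>
definition prec :: "'a list \<Rightarrow> 'a \<Rightarrow> 'a \<Rightarrow> bool" where
  "prec xs v w \<longleftrightarrow> (\<exists>i j. i < j \<and> j < length xs \<and> xs ! i = v \<and> xs ! j = w)"

definition SLO_ordering :: "'a set \<Rightarrow> 'a set set \<Rightarrow> 'a \<Rightarrow> 'a list \<Rightarrow> bool" where
  "SLO_ordering V E v0 xs \<longleftrightarrow> distinct xs \<and> set xs = V \<and>
     (\<forall>v w. prec xs v w \<longrightarrow> gdist E v v0 \<le> gdist E w v0) \<and>
     (\<forall>v1 v2 c1 c2. prec xs v1 v2 \<and> is_child E v0 v1 c1 \<and> is_child E v0 v2 c2
        \<longrightarrow> prec xs c1 c2) \<and>
     (\<forall>v w. prec xs v w \<and> v \<in> boundary V E \<longrightarrow> w \<in> boundary V E)"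

definition SLO_star_ordering :: "'a set \<Rightarrow> 'a set set \<Rightarrow> 'a \<Rightarrow> 'a list \<Rightarrow> bool" where
  "SLO_star_ordering V E v0 xs \<longleftrightarrow> SLO_ordering V E v0 xs \<and>
     (\<forall>v w. v \<in> interior V E \<and> w \<in> interior V E \<and> prec xs v w \<longrightarrow> deg E v \<le> deg E w)"

definition SLO_star_tree :: "'a set \<Rightarrow> 'a set set \<Rightarrow> bool" where
  "SLO_star_tree V E \<longleftrightarrow> tree_with_boundary V E \<and>
     (\<exists>v0\<in>V. \<exists>xs. SLO_star_ordering V E v0 xs)"

end

(*
  Let f be an eigenfunction of the Dirichlet operator of G for lambda(G) and g = |f|; passing to
  g does not increase the Dirichlet energy. List the interior vertices by decreasing g and build
  on the same vertex set the breadth-first tree G* in which the interior vertices, in this order,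
  receive the interior degrees of G sorted increasingly, and the leaves come last; G* is an
  SLO*-tree with the degree sequence of G.

  By the layer-cake formula g is a nonnegative combination of the indicators of the prefix sets
  X_t of this list, so the energy of g is a nonnegative combination of the numbers of edges
  joining X_t to the complement of X_s (t <= s). In G* this number is at most
  (sum of the t smallest interior degrees) - (t - 1) - (s - 1), while in G it is at least this
  bound because X_t and X_s induce forests. Hence the energy of g in G* is at most its energy in
  G, and the Rayleigh principle shows that lambda of G* is at most lambda(G).
*)

theory Submission
  imports Defs "HOL-Analysis.Analysis"
begin

section \<open>Rayleigh quotient of the Dirichlet operator\<close>

lemma orthonormal_family_card_le:
  fixes e :: "'b \<Rightarrow> 'a \<Rightarrow> real"
  assumes fI: "finite I" and fS: "finite S"
    and orth: "\<And>\<mu> \<nu>. \<mu> \<in> S \<Longrightarrow> \<nu> \<in> S \<Longrightarrow> (\<Sum>v\<in>I. e \<mu> v * e \<nu> v) = (if \<mu> = \<nu> then 1 else 0)"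
  shows "card S \<le> card I"
proof -
  have bessel: "(\<Sum>\<mu>\<in>S. (e \<mu> v)\<^sup>2) \<le> 1" if v: "v \<in> I" for v
  proof -
    define s where "s w = (\<Sum>\<mu>\<in>S. e \<mu> v * e \<mu> w)" for w
    have "(\<Sum>w\<in>I. s w * s w) = (\<Sum>w\<in>I. \<Sum>\<mu>\<in>S. \<Sum>\<nu>\<in>S. e \<mu> v * e \<nu> v * (e \<mu> w * e \<nu> w))"
      unfolding s_def sum_product by (simp add: mult_ac)
    also have "\<dots> = (\<Sum>\<mu>\<in>S. \<Sum>\<nu>\<in>S. \<Sum>w\<in>I. e \<mu> v * e \<nu> v * (e \<mu> w * e \<nu> w))"
      by (subst sum.swap, intro sum.cong refl, rule sum.swap)
    also have "\<dots> = (\<Sum>\<mu>\<in>S. \<Sum>\<nu>\<in>S. e \<mu> v * e \<nu> v * (\<Sum>w\<in>I. e \<mu> w * e \<nu> w))"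
      by (simp add: sum_distrib_left)
    also have "\<dots> = (\<Sum>\<mu>\<in>S. \<Sum>\<nu>\<in>S. e \<mu> v * e \<nu> v * (if \<mu> = \<nu> then 1 else 0))"
      by (intro sum.cong refl) (simp add: orth)
    also have "\<dots> = s v"
      unfolding s_def using fS by (simp add: if_distrib[of "\<lambda>t. _ * t"] cong: if_cong)
    finally have ss: "(\<Sum>w\<in>I. s w * s w) = s v" .
    define \<delta> where "\<delta> w = (if w = v then 1 else 0 :: real)" for w
    have "0 \<le> (\<Sum>w\<in>I. (\<delta> w - s w)\<^sup>2)"
      by (simp add: sum_nonneg)
    also have "\<dots> = (\<Sum>w\<in>I. \<delta> w - 2 * (\<delta> w * s w) + s w * s w)"
      by (intro sum.cong refl) (simp add: \<delta>_def power2_eq_square algebra_simps)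
    also have "\<dots> = 1 - 2 * s v + (\<Sum>w\<in>I. s w * s w)"
      using fI v by (simp add: sum.distrib sum_subtractf sum_distrib_left[symmetric] \<delta>_def
          if_distrib[of "\<lambda>t. t * _"] cong: if_cong)
    finally show ?thesis using ss by (simp add: s_def power2_eq_square)
  qed
  have "real (card S) = (\<Sum>\<mu>\<in>S. \<Sum>v\<in>I. (e \<mu> v)\<^sup>2)"
    using orth by (simp add: power2_eq_square)
  also have "\<dots> = (\<Sum>v\<in>I. \<Sum>\<mu>\<in>S. (e \<mu> v)\<^sup>2)" by (rule sum.swap)
  also have "\<dots> \<le> (\<Sum>v\<in>I. 1)" by (rule sum_mono) (rule bessel)
  finally show ?thesis by simp
qed

lemma continuous_on_coordinate: "continuous_on S (\<lambda>x::'a \<Rightarrow> real. x i)"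
  by (rule continuous_on_subset[OF continuous_on_product_coordinates]) simp

lemma unit_sphere_attains_min:
  fixes I :: "'a set" and F :: "('a \<Rightarrow> real) \<Rightarrow> real"
  assumes fI: "finite I" and ne: "I \<noteq> {}" and cF: "continuous_on UNIV F"
  defines "Sph \<equiv> {x. (\<forall>v. v \<notin> I \<longrightarrow> x v = 0) \<and> (\<Sum>v\<in>I. (x v)\<^sup>2) = 1}"
  shows "\<exists>x0\<in>Sph. \<forall>x\<in>Sph. F x0 \<le> F x"
proof -
  define B where "B = Pi\<^sub>E UNIV (\<lambda>v. if v \<in> I then {-1..1::real} else {0})"
  have "compactin (product_topology (\<lambda>_. euclidean) UNIV) B"
    unfolding B_def by (subst compactin_PiE) auto
  then have "compact B" by (simp add: euclidean_product_topology)
  moreover have "closed {x::'a\<Rightarrow>real. (\<Sum>v\<in>I. (x v)\<^sup>2) = 1}"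
    by (intro closed_Collect_eq continuous_intros continuous_on_coordinate)
  ultimately have "compact (B \<inter> {x. (\<Sum>v\<in>I. (x v)\<^sup>2) = 1})"
    by (rule compact_Int_closed)
  moreover have "B \<inter> {x. (\<Sum>v\<in>I. (x v)\<^sup>2) = 1} = Sph"
  proof (intro equalityI subsetI)
    fix x assume x: "x \<in> Sph"
    have "\<bar>x v\<bar> \<le> 1" if "v \<in> I" for v
    proof -
      have "(x v)\<^sup>2 \<le> (\<Sum>v\<in>I. (x v)\<^sup>2)"
        by (rule member_le_sum) (use that fI in auto)
      then show ?thesis using x by (simp add: Sph_def abs_square_le_1)
    qed
    then show "x \<in> B \<inter> {x. (\<Sum>v\<in>I. (x v)\<^sup>2) = 1}"
      using x by (auto simp: Sph_def B_def PiE_UNIV_domain abs_le_iff)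
  qed (auto simp: Sph_def B_def PiE_UNIV_domain split: if_splits)
  moreover obtain v0 where "v0 \<in> I" using ne by auto
  then have "(\<lambda>v. if v = v0 then 1 else 0) \<in> Sph"
    using fI by (simp add: Sph_def if_distrib[of "\<lambda>t. t\<^sup>2"] cong: if_cong)
  ultimately show ?thesis
    using continuous_attains_inf[of Sph F] continuous_on_subset[OF cF] by blast
qed

lemma linear_coeff_eq_0_if_quadratic_nonneg:
  fixes c K :: real
  assumes "\<And>t. 0 \<le> 2 * t * c + t\<^sup>2 * K"
  shows "c = 0"
proof (rule ccontr)
  assume "c \<noteq> 0"
  define a where "a = \<bar>K\<bar> + 1"
  have a: "a > 0" "K \<le> a" unfolding a_def by auto
  \<comment> \<open>the quadratic at its vertex t = -c/a is -c^2/a < 0\<close>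
  have "0 \<le> 2 * (- c / a) * c + (- c / a)\<^sup>2 * K" by (rule assms)
  also have "\<dots> \<le> 2 * (- c / a) * c + (- c / a)\<^sup>2 * a"
    using a by (intro add_left_mono mult_left_mono) auto
  also have "\<dots> = - (c\<^sup>2 / a)" using a by (simp add: field_simps power2_eq_square)
  moreover have "c\<^sup>2 / a > 0" using \<open>c \<noteq> 0\<close> a by simp
  ultimately show False by linarith
qed

definition dirichlet_form :: "'a set \<Rightarrow> 'a set set \<Rightarrow> ('a \<Rightarrow> real) \<Rightarrow> ('a \<Rightarrow> real) \<Rightarrow> real" where
  "dirichlet_form V E x y = (\<Sum>v\<in>Defs.interior V E. y v * dirichlet_op V E x v)"

definition interior_inner :: "'a set \<Rightarrow> 'a set set \<Rightarrow> ('a \<Rightarrow> real) \<Rightarrow> ('a \<Rightarrow> real) \<Rightarrow> real" where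
  "interior_inner V E x y = (\<Sum>v\<in>Defs.interior V E. x v * y v)"

lemma dirichlet_op_linear:
  "dirichlet_op V E (\<lambda>w. a * x w + b * y w) v = a * dirichlet_op V E x v + b * dirichlet_op V E y v"
  unfolding dirichlet_op_def by (simp add: sum.distrib sum_distrib_left algebra_simps)

lemma dirichlet_op_scale: "dirichlet_op V E (\<lambda>w. a * x w) v = a * dirichlet_op V E x v"
  using dirichlet_op_linear[of V E a x 0 x v] by simp

lemma finite_interior: "finite V \<Longrightarrow> finite (Defs.interior V E)"
  unfolding Defs.interior_def by simp

lemma dirichlet_form_commute:
  assumes "finite V"
  shows "dirichlet_form V E x y = dirichlet_form V E y x"
proof -
  let ?I = "Defs.interior V E"
  have fI: "finite ?I" using assms by (rule finite_interior)
  have "(\<Sum>v\<in>?I. \<Sum>w\<in>{w\<in>?I. {v,w}\<in>E}. y v * x w) = (\<Sum>w\<in>?I. \<Sum>v\<in>{v\<in>?I. {v,w}\<in>E}. y v * x w)"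
    by (rule sum.swap_restrict[OF fI fI])
  also have "\<dots> = (\<Sum>v\<in>?I. \<Sum>w\<in>{w\<in>?I. {v,w}\<in>E}. x v * y w)"
    by (simp add: insert_commute mult.commute)
  finally show ?thesis
    unfolding dirichlet_form_def dirichlet_op_def
    by (simp add: right_diff_distrib sum_subtractf sum_distrib_left algebra_simps)
qed

lemma dirichlet_form_cong:
  assumes "\<And>v. v \<in> Defs.interior V E \<Longrightarrow> x' v = x v"
    and "\<And>v. v \<in> Defs.interior V E \<Longrightarrow> y' v = y v"
  shows "dirichlet_form V E x' y' = dirichlet_form V E x y"
  using assms unfolding dirichlet_form_def dirichlet_op_def by simp

lemma dirichlet_form_eigenvector:
  assumes "\<forall>v\<in>Defs.interior V E. dirichlet_op V E x v = \<mu> * x v"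
  shows "dirichlet_form V E x y = \<mu> * interior_inner V E x y"
  unfolding dirichlet_form_def interior_inner_def using assms
  by (simp add: sum_distrib_left algebra_simps)

lemma interior_inner_self_nonneg: "interior_inner V E x x \<ge> 0"
  unfolding interior_inner_def by (simp add: sum_nonneg)

lemma interior_inner_self_pos:
  assumes "finite V" "v \<in> Defs.interior V E" "x v \<noteq> 0"
  shows "interior_inner V E x x > 0"
  unfolding interior_inner_def
  using assms finite_interior[OF assms(1)]
  by (intro sum_pos2[of _ v]) (auto simp: zero_less_mult_iff linorder_neq_iff)

lemma interior_inner_self_eq_0:
  assumes "finite V"
  shows "interior_inner V E x x = 0 \<longleftrightarrow> (\<forall>v\<in>Defs.interior V E. x v = 0)"
  using interior_inner_self_pos[OF assms] by (fastforce simp: interior_inner_def)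

lemma dirichlet_form_scale:
  "dirichlet_form V E (\<lambda>w. c * x w) (\<lambda>w. c * x w) = c\<^sup>2 * dirichlet_form V E x x"
  unfolding dirichlet_form_def dirichlet_op_scale
  by (simp add: sum_distrib_left algebra_simps power2_eq_square)

lemma interior_inner_scale:
  "interior_inner V E (\<lambda>w. c * x w) (\<lambda>w. c * x w) = c\<^sup>2 * interior_inner V E x x"
  unfolding interior_inner_def by (simp add: sum_distrib_left algebra_simps power2_eq_square)

lemma dirichlet_form_add_scaled:
  assumes "finite V"
  shows "dirichlet_form V E (\<lambda>w. x w + t * y w) (\<lambda>w. x w + t * y w)
    = dirichlet_form V E x x + 2 * t * dirichlet_form V E x y + t\<^sup>2 * dirichlet_form V E y y"
proof -
  have "dirichlet_op V E (\<lambda>w. x w + t * y w) v = dirichlet_op V E x v + t * dirichlet_op V E y v" for v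
    using dirichlet_op_linear[of V E 1 x t y v] by simp
  then have "dirichlet_form V E (\<lambda>w. x w + t * y w) (\<lambda>w. x w + t * y w)
      = dirichlet_form V E x x + t * (dirichlet_form V E x y + dirichlet_form V E y x)
        + t\<^sup>2 * dirichlet_form V E y y"
    unfolding dirichlet_form_def
    by (simp add: sum.distrib sum_distrib_left algebra_simps power2_eq_square)
  then show ?thesis using dirichlet_form_commute[OF assms, of E y x] by simp
qed

lemma interior_inner_add_scaled:
  "interior_inner V E (\<lambda>w. x w + t * y w) (\<lambda>w. x w + t * y w)
    = interior_inner V E x x + 2 * t * interior_inner V E x y + t\<^sup>2 * interior_inner V E y y"
  unfolding interior_inner_def
  by (simp add: sum.distrib sum_distrib_left algebra_simps power2_eq_square)

context
  fixes V :: "'a set" and E :: "'a set set"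
  assumes fV: "finite V" and interior_ne: "Defs.interior V E \<noteq> {}"
begin

lemma rayleigh_bound_if_unit_min:
  assumes min: "\<And>y. (\<forall>v. v \<notin> Defs.interior V E \<longrightarrow> y v = 0) \<Longrightarrow>
      (\<Sum>v\<in>Defs.interior V E. (y v)\<^sup>2) = 1 \<Longrightarrow> m \<le> dirichlet_form V E y y"
  shows "m * interior_inner V E x x \<le> dirichlet_form V E x x"
proof (cases "interior_inner V E x x = 0")
  case True
  then have "dirichlet_form V E x x = dirichlet_form V E (\<lambda>_. 0) (\<lambda>_. 0)"
    using interior_inner_self_eq_0[OF fV] by (intro dirichlet_form_cong) auto
  then show ?thesis using True by (simp add: dirichlet_form_def dirichlet_op_def)
next
  case False
  then have pos: "interior_inner V E x x > 0" using interior_inner_self_nonneg[of V E x] by simp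
  define c where "c = 1 / sqrt (interior_inner V E x x)"
  define y where "y w = c * (if w \<in> Defs.interior V E then x w else 0)" for w
  have c2: "c\<^sup>2 = 1 / interior_inner V E x x" unfolding c_def using pos by (simp add: power_divide)
  have "interior_inner V E y y = c\<^sup>2 * interior_inner V E x x"
    unfolding y_def interior_inner_scale[symmetric] by (simp add: interior_inner_def)
  then have "(\<Sum>v\<in>Defs.interior V E. (y v)\<^sup>2) = 1"
    using pos c2 by (simp add: interior_inner_def power2_eq_square)
  then have "m \<le> dirichlet_form V E y y" by (intro min) (simp add: y_def)
  also have "dirichlet_form V E y y = c\<^sup>2 * dirichlet_form V E x x"
    unfolding y_def dirichlet_form_scale[symmetric] by (intro dirichlet_form_cong) auto
  finally show ?thesis using pos c2 by (simp add: field_simps)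
qed

lemma rayleigh_minimizer_eigenvector:
  assumes bound: "\<And>x. m * interior_inner V E x x \<le> dirichlet_form V E x x"
    and unit: "interior_inner V E x0 x0 = 1" and min: "dirichlet_form V E x0 x0 = m"
    and v: "v \<in> Defs.interior V E"
  shows "dirichlet_op V E x0 v = m * x0 v"
proof (rule linear_coeff_eq_0_if_quadratic_nonneg[THEN eq_iff_diff_eq_0[THEN iffD2]])
  fix t :: real
  define \<delta> where "\<delta> w = (if w = v then 1 else 0 :: real)" for w
  have "interior_inner V E x0 \<delta> = x0 v" "dirichlet_form V E x0 \<delta> = dirichlet_op V E x0 v"
    using v finite_interior[OF fV]
    by (simp_all add: interior_inner_def dirichlet_form_def \<delta>_def if_distrib[of "\<lambda>t. _ * t"]
        if_distrib[of "\<lambda>t. t * _"] cong: if_cong)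
  moreover have "m * interior_inner V E (\<lambda>w. x0 w + t * \<delta> w) (\<lambda>w. x0 w + t * \<delta> w)
      \<le> dirichlet_form V E (\<lambda>w. x0 w + t * \<delta> w) (\<lambda>w. x0 w + t * \<delta> w)"
    by (rule bound)
  ultimately show "0 \<le> 2 * t * (dirichlet_op V E x0 v - m * x0 v)
      + t\<^sup>2 * (dirichlet_form V E \<delta> \<delta> - m * interior_inner V E \<delta> \<delta>)"
    unfolding dirichlet_form_add_scaled[OF fV] interior_inner_add_scaled unit min[symmetric]
    by (simp add: algebra_simps)
qed

lemma rayleigh_minimum_eigenvalue:
  "\<exists>m\<in>dirichlet_eigenvalues V E. \<forall>x. m * interior_inner V E x x \<le> dirichlet_form V E x x"
proof -
  let ?I = "Defs.interior V E"
  obtain x0 where x0_supp: "\<forall>v. v \<notin> ?I \<longrightarrow> x0 v = 0" and x0_norm: "(\<Sum>v\<in>?I. (x0 v)\<^sup>2) = 1"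
    and x0_min: "\<And>x. (\<forall>v. v \<notin> ?I \<longrightarrow> x v = 0) \<Longrightarrow> (\<Sum>v\<in>?I. (x v)\<^sup>2) = 1 \<Longrightarrow>
        dirichlet_form V E x0 x0 \<le> dirichlet_form V E x x"
    using unit_sphere_attains_min[OF finite_interior[OF fV] interior_ne,
        of "\<lambda>x. dirichlet_form V E x x"]
    unfolding dirichlet_form_def dirichlet_op_def
    by (fastforce intro: continuous_intros continuous_on_coordinate)
  have x0_unit: "interior_inner V E x0 x0 = 1"
    using x0_norm unfolding interior_inner_def by (simp add: power2_eq_square)
  have bound: "dirichlet_form V E x0 x0 * interior_inner V E x x \<le> dirichlet_form V E x x" for x
    using x0_min by (rule rayleigh_bound_if_unit_min)
  moreover have "\<exists>v\<in>?I. x0 v \<noteq> 0"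
    using x0_unit interior_inner_self_eq_0[OF fV, of E x0] by auto
  then have "dirichlet_form V E x0 x0 \<in> dirichlet_eigenvalues V E"
    using rayleigh_minimizer_eigenvector[OF bound x0_unit refl]
    unfolding dirichlet_eigenvalues_def by blast
  ultimately show ?thesis by blast
qed

lemma finite_dirichlet_eigenvalues: "finite (dirichlet_eigenvalues V E)"
proof (rule ccontr)
  let ?I = "Defs.interior V E"
  assume "infinite (dirichlet_eigenvalues V E)"
  then obtain S where S: "finite S" "card S = Suc (card ?I)" "S \<subseteq> dirichlet_eigenvalues V E"
    using infinite_arbitrarily_large by blast
  have "\<exists>x. interior_inner V E x x = 1 \<and> (\<forall>v\<in>?I. dirichlet_op V E x v = \<mu> * x v)"
    if \<mu>: "\<mu> \<in> S" for \<mu>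
  proof -
    obtain x v where x: "v \<in> ?I" "x v \<noteq> 0" "\<forall>v\<in>?I. dirichlet_op V E x v = \<mu> * x v"
      using S(3) \<mu> unfolding dirichlet_eigenvalues_def by blast
    define c where "c = 1 / sqrt (interior_inner V E x x)"
    have "interior_inner V E x x > 0" using interior_inner_self_pos[of V v E x, OF fV x(1,2)] .
    then have "interior_inner V E (\<lambda>w. c * x w) (\<lambda>w. c * x w) = 1"
      unfolding interior_inner_scale c_def by (simp add: power_divide)
    moreover have "\<forall>v\<in>?I. dirichlet_op V E (\<lambda>w. c * x w) v = \<mu> * (c * x v)"
      using x(3) by (simp add: dirichlet_op_scale)
    ultimately show ?thesis by blast
  qed
  then obtain e where e_unit: "\<And>\<mu>. \<mu> \<in> S \<Longrightarrow> interior_inner V E (e \<mu>) (e \<mu>) = 1"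
    and e_eig: "\<And>\<mu>. \<mu> \<in> S \<Longrightarrow> \<forall>v\<in>?I. dirichlet_op V E (e \<mu>) v = \<mu> * e \<mu> v"
    by metis
  have "interior_inner V E (e \<mu>) (e \<nu>) = 0" if "\<mu> \<in> S" "\<nu> \<in> S" "\<mu> \<noteq> \<nu>" for \<mu> \<nu>
  proof -
    \<comment> \<open>eigenvectors of a symmetric operator for distinct eigenvalues are orthogonal\<close>
    have "\<mu> * interior_inner V E (e \<mu>) (e \<nu>) = \<nu> * interior_inner V E (e \<nu>) (e \<mu>)"
      using dirichlet_form_commute[OF fV, of E "e \<mu>" "e \<nu>"]
        dirichlet_form_eigenvector[OF e_eig[OF that(1)], of "e \<nu>"]
        dirichlet_form_eigenvector[OF e_eig[OF that(2)], of "e \<mu>"]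
      by simp
    then show ?thesis using that(3) by (simp add: interior_inner_def mult.commute)
  qed
  then have "card S \<le> card ?I"
    using e_unit by (intro orthonormal_family_card_le[OF finite_interior[OF fV] S(1)])
      (auto simp: interior_inner_def)
  then show False using S(2) by simp
qed

lemma lambda_min_le_rayleigh:
  "lambda_min V E * interior_inner V E x x \<le> dirichlet_form V E x x"
proof -
  obtain m where m: "m \<in> dirichlet_eigenvalues V E"
    and m_bound: "\<And>x. m * interior_inner V E x x \<le> dirichlet_form V E x x"
    using rayleigh_minimum_eigenvalue by blast
  have "m \<le> \<mu>" if \<mu>: "\<mu> \<in> dirichlet_eigenvalues V E" for \<mu>
  proof -
    obtain x v where x: "v \<in> Defs.interior V E" "x v \<noteq> 0"
      "\<forall>v\<in>Defs.interior V E. dirichlet_op V E x v = \<mu> * x v"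
      using \<mu> unfolding dirichlet_eigenvalues_def by blast
    have "m * interior_inner V E x x \<le> \<mu> * interior_inner V E x x"
      using m_bound[of x] dirichlet_form_eigenvector[OF x(3)] by simp
    then show ?thesis using interior_inner_self_pos[of V v E x, OF fV x(1,2)] by simp
  qed
  then have "lambda_min V E = m"
    unfolding lambda_min_def using m by (intro Min_eqI finite_dirichlet_eigenvalues) auto
  then show ?thesis using m_bound by simp
qed

lemma lambda_min_eigenvalue: "lambda_min V E \<in> dirichlet_eigenvalues V E"
  unfolding lambda_min_def using rayleigh_minimum_eigenvalue finite_dirichlet_eigenvalues
  by (intro Min_in) auto

end

section \<open>Counting arcs in trees\<close>

definition arcs :: "'a set set \<Rightarrow> 'a set \<Rightarrow> 'a set \<Rightarrow> ('a \<times> 'a) set" where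
  "arcs E X Y = {(u, w). u \<in> X \<and> w \<in> Y \<and> {u, w} \<in> E}"

lemma finite_arcs: "finite X \<Longrightarrow> finite Y \<Longrightarrow> finite (arcs E X Y)"
  unfolding arcs_def by (rule finite_subset[of _ "X \<times> Y"]) auto

lemma card_arcs_eq_sum:
  "finite X \<Longrightarrow> finite Y \<Longrightarrow> card (arcs E X Y) = (\<Sum>u\<in>X. card {w\<in>Y. {u, w} \<in> E})"
proof -
  assume "finite X" "finite Y"
  moreover have "arcs E X Y = Sigma X (\<lambda>u. {w\<in>Y. {u, w} \<in> E})"
    unfolding arcs_def by auto
  ultimately show ?thesis by (simp add: card_SigmaI)
qed

lemma arcs_converse: "(arcs E X Y)\<inverse> = arcs E Y X"
  unfolding arcs_def by (auto simp: insert_commute)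

lemma card_arcs_commute: "card (arcs E X Y) = card (arcs E Y X)"
  by (metis arcs_converse card_inverse)

lemma sum_arcs_swap: "(\<Sum>(u, w)\<in>arcs E X X. f w u) = (\<Sum>(u, w)\<in>arcs E X X. f u w)"
proof -
  have "prod.swap ` arcs E X X = (arcs E X X)\<inverse>" by auto
  then have swap: "prod.swap ` arcs E X X = arcs E X X" by (simp only: arcs_converse)
  have "(\<Sum>(u, w)\<in>arcs E X X. f w u) = (\<Sum>p\<in>arcs E X X. (\<lambda>(u, w). f u w) (prod.swap p))"
    by (intro sum.cong) auto
  also have "\<dots> = (\<Sum>(u, w)\<in>prod.swap ` arcs E X X. f u w)"
    by (rule sum.reindex[OF inj_swap, unfolded comp_def, symmetric])
  finally show ?thesis by (simp only: swap)
qed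

lemma card_arcs_Un_right:
  assumes "finite X" "finite Y" "finite Z" "Y \<inter> Z = {}"
  shows "card (arcs E X (Y \<union> Z)) = card (arcs E X Y) + card (arcs E X Z)"
proof -
  have "arcs E X (Y \<union> Z) = arcs E X Y \<union> arcs E X Z" "arcs E X Y \<inter> arcs E X Z = {}"
    using assms(4) unfolding arcs_def by auto
  then show ?thesis using assms by (simp add: card_Un_disjoint finite_arcs)
qed

lemma card_arcs_Un_left:
  "finite X \<Longrightarrow> finite Y \<Longrightarrow> finite Z \<Longrightarrow> X \<inter> Y = {} \<Longrightarrow>
    card (arcs E (X \<union> Y) Z) = card (arcs E X Z) + card (arcs E Y Z)"
  using card_arcs_Un_right[of Z X Y E] by (simp add: card_arcs_commute)

lemma simple_graph_edgeD:
  assumes "simple_graph V E" "{u, w} \<in> E"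
  shows "u \<in> V \<and> w \<in> V \<and> u \<noteq> w"
proof -
  obtain a b where "{u, w} = {a, b}" "a \<noteq> b" "a \<in> V" "b \<in> V"
    using assms unfolding simple_graph_def by blast
  then show ?thesis by (auto simp: doubleton_eq_iff)
qed

lemma simple_graph_deg: "simple_graph V E \<Longrightarrow> deg E v = card {w\<in>V. {v, w} \<in> E}"
  unfolding deg_def by (metis (lifting) simple_graph_edgeD)

lemma simple_graph_sum_deg:
  "simple_graph V E \<Longrightarrow> X \<subseteq> V \<Longrightarrow> (\<Sum>v\<in>X. deg E v) = card (arcs E X V)"
  by (simp add: card_arcs_eq_sum simple_graph_deg simple_graph_def finite_subset)

lemma is_cycle_take:
  assumes dist: "distinct ps" and path: "\<And>i. Suc i < length ps \<Longrightarrow> {ps!i, ps!Suc i} \<in> E"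
    and j: "2 \<le> j" "j < length ps" and closing: "{ps!0, ps!j} \<in> E"
  shows "is_cycle E (take (Suc j) ps)"
  unfolding is_cycle_def
proof (intro conjI allI impI)
  show "3 \<le> length (take (Suc j) ps)" "distinct (take (Suc j) ps)" using j dist by auto
  fix i assume i: "i < length (take (Suc j) ps)"
  show "{take (Suc j) ps ! i, take (Suc j) ps ! ((i + 1) mod length (take (Suc j) ps))} \<in> E"
  proof (cases "i = j")
    case True
    then show ?thesis using j closing by (simp add: insert_commute)
  next
    case False
    then show ?thesis using i j path[of i] by simp
  qed
qed

lemma exists_cycle_if_two_neighbours:
  assumes fW: "finite W" and W_ne: "W \<noteq> {}" and no_loop: "\<forall>v. {v, v} \<notin> E"
    and two: "\<forall>v\<in>W. \<exists>a b. a \<noteq> b \<and> a \<in> W \<and> b \<in> W \<and> {v, a} \<in> E \<and> {v, b} \<in> E"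
  shows "\<exists>cs. set cs \<subseteq> W \<and> is_cycle E cs"
proof -
  define P where "P ps \<longleftrightarrow> distinct ps \<and> set ps \<subseteq> W \<and> ps \<noteq> [] \<and>
    (\<forall>i. Suc i < length ps \<longrightarrow> {ps!i, ps!Suc i} \<in> E)" for ps
  obtain w0 where "w0 \<in> W" using W_ne by auto
  then have "P [w0]" unfolding P_def by auto
  moreover have "\<forall>ps. P ps \<longrightarrow> length ps < card W + 1"
    unfolding P_def using fW by (metis card_mono distinct_card less_Suc_eq_le Suc_eq_plus1)
  ultimately obtain ps where ps: "P ps" and longest: "\<And>qs. P qs \<Longrightarrow> length qs \<le> length ps"
    using ex_has_greatest_nat[of P "[w0]" length "card W + 1"] by blast
  then have ps_ne: "ps \<noteq> []" and ps_W: "set ps \<subseteq> W" unfolding P_def by auto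
  \<comment> \<open>the first vertex of a longest path has a neighbour other than its successor,
    which must already lie on the path\<close>
  obtain u where u: "u \<in> W" "{ps!0, u} \<in> E" "length ps \<ge> 2 \<longrightarrow> u \<noteq> ps!1"
    using two ps_W ps_ne by (metis hd_conv_nth hd_in_set subsetD)
  have "u \<in> set ps"
  proof (rule ccontr)
    assume "u \<notin> set ps"
    then have "P (u # ps)"
      using ps u unfolding P_def by (auto simp: nth_Cons insert_commute split: nat.split)
    then show False using longest by fastforce
  qed
  then obtain j where j: "j < length ps" "ps!j = u" by (auto simp: in_set_conv_nth)
  have "j \<noteq> 0" using j u(2) no_loop by (metis insert_absorb2)
  moreover have "j \<noteq> 1" using j u(3) by auto
  ultimately have "is_cycle E (take (Suc j) ps)"
    using ps j u(2) unfolding P_def by (intro is_cycle_take) auto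
  moreover have "set (take (Suc j) ps) \<subseteq> W" using ps_W by (meson set_take_subset subset_trans)
  ultimately show ?thesis by blast
qed

lemma exists_leaf_if_acyclic:
  assumes "finite Y" "Y \<noteq> {}" "\<forall>v. {v, v} \<notin> E" "\<not> (\<exists>cs. set cs \<subseteq> Y \<and> is_cycle E cs)"
  shows "\<exists>y\<in>Y. card {w\<in>Y - {y}. {y, w} \<in> E} \<le> 1"
proof -
  have "\<not> (\<forall>v\<in>Y. \<exists>a b. a \<noteq> b \<and> a \<in> Y \<and> b \<in> Y \<and> {v, a} \<in> E \<and> {v, b} \<in> E)"
    using assms(4) by (rule contrapos_nn) (rule exists_cycle_if_two_neighbours[OF assms(1-3)])
  then obtain y where y: "y \<in> Y"
    and leaf: "\<not> (\<exists>a b. a \<noteq> b \<and> a \<in> Y \<and> b \<in> Y \<and> {y, a} \<in> E \<and> {y, b} \<in> E)"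
    by blast
  have "card {w\<in>Y - {y}. {y, w} \<in> E} \<le> Suc 0"
    using leaf assms(1) by (subst card_le_Suc0_iff_eq) auto
  then show ?thesis using y by auto
qed

lemma card_arcs_le_if_acyclic:
  assumes "finite Y" "Y \<noteq> {}" "\<forall>v. {v, v} \<notin> E" "\<not> (\<exists>cs. set cs \<subseteq> Y \<and> is_cycle E cs)"
  shows "card (arcs E Y Y) + 2 \<le> 2 * card Y"
  using assms
proof (induction "card Y" arbitrary: Y rule: less_induct)
  case less
  obtain y where y: "y \<in> Y" and leaf: "card {w\<in>Y - {y}. {y, w} \<in> E} \<le> 1"
    using exists_leaf_if_acyclic[OF less.prems] by blast
  let ?Y' = "Y - {y}"
  have fin: "finite ?Y'" "finite {y}" using less.prems(1) by auto
  have "card (arcs E {y} ?Y') \<le> 1" using leaf fin by (simp add: card_arcs_eq_sum)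
  moreover have "arcs E {y} {y} = {}" using less.prems(3) by (simp add: arcs_def)
  moreover have "card (arcs E Y Y) = card (arcs E ?Y' ?Y') + card (arcs E ?Y' {y})
      + (card (arcs E {y} ?Y') + card (arcs E {y} {y}))"
  proof -
    have "card (arcs E Y Y) = card (arcs E (?Y' \<union> {y}) (?Y' \<union> {y}))"
      using y by (simp add: insert_absorb)
    also have "\<dots> = card (arcs E ?Y' (?Y' \<union> {y})) + card (arcs E {y} (?Y' \<union> {y}))"
      by (rule card_arcs_Un_left) (use fin in auto)
    also have "\<dots> = card (arcs E ?Y' ?Y') + card (arcs E ?Y' {y})
        + (card (arcs E {y} ?Y') + card (arcs E {y} {y}))"
      using fin by (simp only: card_arcs_Un_right Diff_disjoint Int_commute)
    finally show ?thesis .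
  qed
  ultimately have step: "card (arcs E Y Y) \<le> card (arcs E ?Y' ?Y') + 2"
    by (simp add: card_arcs_commute[of E ?Y' "{y}"])
  show ?case
  proof (cases "?Y' = {}")
    case True
    then have "Y = {y}" using y by auto
    then show ?thesis using \<open>arcs E {y} {y} = {}\<close> by simp
  next
    case False
    have "card ?Y' < card Y" using less.prems(1) y by (rule card_Diff1_less)
    then have "card (arcs E ?Y' ?Y') + 2 \<le> 2 * card ?Y'"
      using less.prems False by (intro less.hyps) auto
    moreover have "Suc (card ?Y') = card Y" using less.prems(1) y by (rule card_Suc_Diff1)
    ultimately show ?thesis using step by simp
  qed
qed

lemma exists_closer_neighbour:
  assumes conn: "connected_graph V E" and r: "r \<in> V" and v: "v \<in> V" "v \<noteq> r"
  shows "\<exists>u. {v, u} \<in> E \<and> gdist E u r < gdist E v r"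
proof -
  define P where "P u n \<longleftrightarrow> (\<exists>ps. is_walk E ps \<and> length ps = Suc n \<and> hd ps = u \<and> last ps = r)"
    for u n
  obtain ps where "is_walk E ps" "hd ps = v" "last ps = r"
    using conn r v unfolding connected_graph_def by blast
  then have "P v (length ps - 1)" unfolding P_def by (intro exI[of _ ps]) (auto simp: is_walk_def)
  then have "P v (gdist E v r)" unfolding gdist_def P_def by (rule LeastI)
  then obtain qs where qs: "is_walk E qs" "length qs = Suc (gdist E v r)" "hd qs = v" "last qs = r"
    unfolding P_def by blast
  have "gdist E v r \<noteq> 0"
  proof
    assume "gdist E v r = 0"
    then have "qs = [v]" using qs by (cases qs) auto
    then show False using qs v by simp
  qed
  then obtain n where n: "gdist E v r = Suc n" using not0_implies_Suc by blast
  then obtain x qs' where qs_eq: "qs = v # x # qs'" using qs by (cases qs rule: remdups_adj.cases) auto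
  have "{v, x} \<in> E" using qs(1) unfolding qs_eq is_walk_def by force
  moreover have "P x n"
    unfolding P_def using qs n qs_eq
    by (intro exI[of _ "x # qs'"]) (auto simp: is_walk_def)
  then have "gdist E x r \<le> n" unfolding gdist_def P_def by (rule Least_le)
  ultimately show ?thesis using n by (intro exI[of _ x]) auto
qed

lemma card_arcs_ge_if_connected:
  assumes simple: "simple_graph V E" and conn: "connected_graph V E" and r: "r \<in> V"
  shows "2 * (card V - 1) \<le> card (arcs E V V)"
proof -
  have fV: "finite V" using simple by (simp add: simple_graph_def)
  obtain par where par: "\<And>v. v \<in> V - {r} \<Longrightarrow> {v, par v} \<in> E \<and> gdist E (par v) r < gdist E v r"
    using exists_closer_neighbour[OF conn r] by (metis DiffE insertI1)
  \<comment> \<open>each non-root vertex contributes the arcs to and from its parent, and these 2 (card V - 1)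
    arcs are distinct because the parent is strictly closer to the root\<close>
  define up where "up = (\<lambda>v. (v, par v)) ` (V - {r})"
  define down where "down = (\<lambda>v. (par v, v)) ` (V - {r})"
  have "card up = card V - 1" "card down = card V - 1"
    unfolding up_def down_def using r fV by (simp_all add: card_image inj_on_def)
  moreover have "up \<inter> down = {}"
  proof -
    have "(v, par v) \<noteq> (par w, w)" if "v \<in> V - {r}" "w \<in> V - {r}" for v w
      using par[OF that(1)] par[OF that(2)] by auto
    then show ?thesis unfolding up_def down_def by blast
  qed
  moreover have sub: "up \<union> down \<subseteq> arcs E V V"
    unfolding up_def down_def arcs_def using par simple_graph_edgeD[OF simple]
    by (auto simp: insert_commute)
  ultimately have "card (up \<union> down) = 2 * (card V - 1)"
    using finite_subset[OF sub finite_arcs[OF fV fV]] by (simp add: card_Un_disjoint)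
  then show ?thesis using card_mono[OF finite_arcs[OF fV fV] sub] by simp
qed

lemma tree_sum_deg:
  assumes "is_tree V E"
  shows "(\<Sum>v\<in>V. deg E v) = 2 * (card V - 1)"
proof -
  have simple: "simple_graph V E" and "V \<noteq> {}" and "connected_graph V E"
    and acyclic: "\<not> (\<exists>cs. set cs \<subseteq> V \<and> is_cycle E cs)"
    using assms unfolding is_tree_def by auto
  moreover have "finite V" using simple by (simp add: simple_graph_def)
  moreover have "\<forall>v. {v, v} \<notin> E" using simple_graph_edgeD[OF simple] by blast
  ultimately have "card (arcs E V V) = 2 * (card V - 1)"
    using card_arcs_le_if_acyclic[of V E] card_arcs_ge_if_connected[of V E] by fastforce
  then show ?thesis using simple_graph_sum_deg[OF simple] by simp
qed

lemma tree_sum_deg_le_cut: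
  assumes tree: "is_tree V E" and XY: "X \<subseteq> Y" "Y \<subseteq> V" and X_ne: "X \<noteq> {}"
  shows "(\<Sum>v\<in>X. deg E v) \<le> card (arcs E X (V - Y)) + (card X - 1) + (card Y - 1)"
proof -
  have simple: "simple_graph V E" and acyclic: "\<not> (\<exists>cs. set cs \<subseteq> V \<and> is_cycle E cs)"
    using tree unfolding is_tree_def by auto
  have fV: "finite V" using simple by (simp add: simple_graph_def)
  have fin: "finite X" "finite Y" "finite (Y - X)" using XY fV by (auto intro: finite_subset)
  have no_loop: "\<forall>v. {v, v} \<notin> E" using simple_graph_edgeD[OF simple] by blast
  have forest: "card (arcs E Z Z) + 2 \<le> 2 * card Z" if "Z \<subseteq> V" "Z \<noteq> {}" for Z
    using that acyclic fV by (intro card_arcs_le_if_acyclic[OF _ _ no_loop]) (auto intro: finite_subset)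
  \<comment> \<open>X and Y induce forests, and 2 * arcs(X, Y) \<le> arcs(X, X) + arcs(Y, Y)\<close>
  have XY_split: "card (arcs E X Y) = card (arcs E X X) + card (arcs E X (Y - X))"
    using card_arcs_Un_right[OF fin(1,1,3), of E] XY(1) by (simp add: Un_absorb1)
  have "card (arcs E Y Y) = card (arcs E X Y) + card (arcs E (Y - X) Y)"
    using card_arcs_Un_left[OF fin(1,3,2), of E] XY(1) by (simp add: Un_absorb1)
  also have "card (arcs E (Y - X) Y) = card (arcs E (Y - X) X) + card (arcs E (Y - X) (Y - X))"
    using card_arcs_Un_right[OF fin(3,1,3), of E] XY(1) by (simp add: Un_absorb1)
  finally have "2 * card (arcs E X Y) \<le> card (arcs E X X) + card (arcs E Y Y)"
    using XY_split card_arcs_commute[of E "Y - X" X] by simp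
  moreover have "card (arcs E X X) + 2 \<le> 2 * card X" "card (arcs E Y Y) + 2 \<le> 2 * card Y"
    using forest[of X] forest[of Y] XY X_ne by auto
  ultimately have inside: "card (arcs E X Y) \<le> (card X - 1) + (card Y - 1)" by linarith
  have "(\<Sum>v\<in>X. deg E v) = card (arcs E X V)"
    using XY by (intro simple_graph_sum_deg[OF simple]) auto
  also have "\<dots> = card (arcs E X Y) + card (arcs E X (V - Y))"
    using card_arcs_Un_right[OF fin(1,2), of "V - Y" E] fV XY(2) by (simp add: Un_absorb1)
  finally show ?thesis using inside by simp
qed

lemma dirichlet_form_eq_sum_arcs:
  assumes simple: "simple_graph V E" and supp: "\<And>v. v \<notin> Defs.interior V E \<Longrightarrow> x v = 0"
  shows "2 * dirichlet_form V E x x = (\<Sum>(u, w)\<in>arcs E V V. (x u - x w)\<^sup>2)"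
proof -
  let ?I = "Defs.interior V E" and ?N = "\<lambda>v. {w\<in>V. {v, w} \<in> E}"
  have fV: "finite V" using simple by (simp add: simple_graph_def)
  have IV: "?I \<subseteq> V" unfolding Defs.interior_def by auto
  have "dirichlet_op V E x v = (\<Sum>w\<in>?N v. x v - x w)" if "v \<in> V" for v
  proof -
    have "(\<Sum>w\<in>{w\<in>?I. {v, w} \<in> E}. x w) = (\<Sum>w\<in>?N v. x w)"
      by (rule sum.mono_neutral_left) (use fV IV supp in auto)
    then show ?thesis
      unfolding dirichlet_op_def simple_graph_deg[OF simple] by (simp add: sum_subtractf)
  qed
  then have "dirichlet_form V E x x = (\<Sum>v\<in>V. \<Sum>w\<in>?N v. x v * (x v - x w))"
    unfolding dirichlet_form_def sum_distrib_left[symmetric]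
    by (intro sum.mono_neutral_cong_left) (use fV IV supp in auto)
  also have "\<dots> = (\<Sum>(u, w)\<in>Sigma V ?N. x u * (x u - x w))"
    using fV by (simp add: sum.Sigma)
  also have "Sigma V ?N = arcs E V V" by (auto simp: arcs_def)
  finally have form: "dirichlet_form V E x x = (\<Sum>(u, w)\<in>arcs E V V. x u * (x u - x w))" .
  have "(\<Sum>(u, w)\<in>arcs E V V. (x u - x w)\<^sup>2)
      = (\<Sum>(u, w)\<in>arcs E V V. x u * (x u - x w)) + (\<Sum>(u, w)\<in>arcs E V V. x w * (x w - x u))"
    by (simp add: sum.distrib[symmetric] case_prod_beta power2_eq_square algebra_simps)
  also have "(\<Sum>(u, w)\<in>arcs E V V. x w * (x w - x u)) = (\<Sum>(u, w)\<in>arcs E V V. x u * (x u - x w))"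
    by (rule sum_arcs_swap)
  finally show ?thesis using form by simp
qed

lemma is_walk_Cons:
  assumes "is_walk E ps" "{x, hd ps} \<in> E"
  shows "is_walk E (x # ps)"
  using assms unfolding is_walk_def by (auto simp: nth_Cons hd_conv_nth split: nat.split)

lemma is_walk_rev:
  assumes "is_walk E ps"
  shows "is_walk E (rev ps)"
  unfolding is_walk_def
proof (intro conjI allI impI)
  show "rev ps \<noteq> []" using assms by (simp add: is_walk_def)
  fix i assume i: "Suc i < length (rev ps)"
  define m where "m = length ps - Suc (Suc i)"
  have "Suc m < length ps" "rev ps ! i = ps ! Suc m" "rev ps ! Suc i = ps ! m"
    using i unfolding m_def by (simp_all add: rev_nth Suc_diff_Suc)
  then show "{rev ps ! i, rev ps ! Suc i} \<in> E"
    using assms by (simp add: is_walk_def insert_commute)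
qed

lemma is_walk_append:
  assumes "is_walk E ps" "is_walk E qs" "last ps = hd qs"
  shows "is_walk E (ps @ tl qs)"
  using assms
proof (induction ps)
  case Nil
  then show ?case by (simp add: is_walk_def)
next
  case (Cons x ps)
  show ?case
  proof (cases "ps = []")
    case True
    then show ?thesis using Cons.prems by (cases qs) (auto simp: is_walk_def)
  next
    case False
    have "is_walk E ps" "{x, hd ps} \<in> E"
      using Cons.prems(1) False unfolding is_walk_def by (auto simp: hd_conv_nth)
    then show ?thesis
      using Cons.IH Cons.prems(2,3) False by (auto intro: is_walk_Cons)
  qed
qed

lemma connected_graph_if_walks_to:
  assumes "\<And>v. v \<in> V \<Longrightarrow> \<exists>ps. is_walk E ps \<and> hd ps = v \<and> last ps = r"
  shows "connected_graph V E"
  unfolding connected_graph_def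
proof (intro ballI)
  fix v w assume "v \<in> V" "w \<in> V"
  then obtain ps qs where ps: "is_walk E ps" "hd ps = v" "last ps = r"
    and qs: "is_walk E qs" "hd qs = w" "last qs = r"
    using assms by meson
  have ne: "ps \<noteq> []" "qs \<noteq> []" using ps(1) qs(1) by (auto simp: is_walk_def)
  have "is_walk E (ps @ tl (rev qs))"
    using ps qs ne by (intro is_walk_append is_walk_rev) (auto simp: hd_rev)
  moreover have "last (ps @ tl (rev qs)) = w"
  proof (cases "tl (rev qs) = []")
    case True
    then have "length qs = 1" using ne(2) by (cases "rev qs") auto
    then have "hd qs = last qs" by (cases qs) auto
    then show ?thesis using True ps(3) qs(2,3) by simp
  next
    case False
    then show ?thesis using qs(2) ne by (simp add: last_tl last_rev)
  qed
  ultimately show "\<exists>ps. is_walk E ps \<and> hd ps = v \<and> last ps = w" using ps(2) ne by auto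
qed

section \<open>The breadth-first tree with a prescribed degree sequence\<close>

lemma distinct_nth_in_set_take_iff:
  assumes "distinct ws" "r < length ws"
  shows "ws!r \<in> set (take t ws) \<longleftrightarrow> r < t"
proof
  assume "ws!r \<in> set (take t ws)"
  then obtain i where "i < length (take t ws)" "take t ws ! i = ws!r" by (auto simp: in_set_conv_nth)
  then show "r < t" using assms by (simp add: nth_eq_iff_index_eq)
next
  assume "r < t"
  then have "take t ws ! r = ws!r" "r < length (take t ws)" using assms(2) by auto
  then show "ws!r \<in> set (take t ws)" by (metis nth_mem)
qed

text \<open>The guard \<open>p j < j\<close> makes \<open>parent_depth\<close> total for arbitrary \<open>p\<close>; for the parent map of
  a breadth-first tree it always holds on positions \<open>1 \<le> j < n\<close>.\<close>

function parent_depth :: "(nat \<Rightarrow> nat) \<Rightarrow> nat \<Rightarrow> nat" where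
  "parent_depth p j = (if 0 < j \<and> p j < j then Suc (parent_depth p (p j)) else 0)"
  by auto
termination by (relation "Wellfounded.measure snd") auto

declare parent_depth.simps [simp del]

text \<open>The vertices are listed in \<open>xs\<close>: the first \<open>k\<close> are to become interior vertices of degrees
  \<open>D\<close>, the others leaves. The root \<open>xs!0\<close> receives the first \<open>D!0\<close> of the remaining positions
  as children, then \<open>xs!1\<close> the next \<open>D!1 - 1\<close>, and so on, in breadth-first order.
  Assumption \<open>sum_D\<close> says that the degrees \<open>D\<close> and \<open>n - k\<close> leaves sum to \<open>2 * (n - 1)\<close>.\<close>

locale breadth_first_tree =
  fixes xs :: "'a list" and D :: "nat list" and k :: nat
  assumes distinct: "distinct xs" and k_pos: "1 \<le> k" and k_less: "k < length xs"
    and length_D: "length D = k" and D_ge_2: "\<And>i. i < k \<Longrightarrow> 2 \<le> D!i" and sorted_D: "sorted D"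
    and sum_D: "sum_list D + 2 = length xs + k"
begin

abbreviation n :: nat where "n \<equiv> length xs"

definition child_count :: "nat \<Rightarrow> nat" where
  "child_count i = (if i = 0 then D!0 else if i < k then D!i - 1 else 0)"

text \<open>The children of \<open>xs!i\<close> are the positions \<open>child_offset i + 1, \<dots>, child_offset (Suc i)\<close>.\<close>

definition child_offset :: "nat \<Rightarrow> nat" where
  "child_offset i = (\<Sum>m<i. child_count m)"

definition parent :: "nat \<Rightarrow> nat" where
  "parent j = (LEAST i. j \<le> child_offset (Suc i))"

lemma child_offset_0 [simp]: "child_offset 0 = 0"
  unfolding child_offset_def by simp

lemma child_offset_Suc: "child_offset (Suc i) = child_offset i + child_count i"
  unfolding child_offset_def by simp

lemma child_offset_mono: "i \<le> i' \<Longrightarrow> child_offset i \<le> child_offset i'"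
  unfolding child_offset_def by (rule sum_mono2) auto

lemma child_offset_eq_sum_D: "1 \<le> i \<Longrightarrow> i \<le> k \<Longrightarrow> child_offset i + (i - 1) = (\<Sum>m<i. D!m)"
proof (induction i)
  case (Suc i)
  then show ?case
    using D_ge_2[of i] by (cases "i = 0") (auto simp: child_offset_Suc child_count_def)
qed simp

lemma child_offset_k: "child_offset k = n - 1"
proof -
  have "sum_list D = (\<Sum>m<k. D!m)" using length_D by (simp add: sum_list_sum_nth atLeast0LessThan)
  then show ?thesis using child_offset_eq_sum_D[OF k_pos le_refl] sum_D k_pos by simp
qed

lemma child_offset_ge: "1 \<le> i \<Longrightarrow> i \<le> k \<Longrightarrow> i + 1 \<le> child_offset i"
proof (induction i)
  case (Suc i)
  then show ?case
    using D_ge_2[of i] D_ge_2[of 0] by (cases "i = 0") (auto simp: child_offset_Suc child_count_def)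
qed simp

lemma child_offset_le: "child_offset i \<le> n - 1"
proof -
  have "child_offset i = child_offset k" if "k \<le> i"
    using that
  proof (induction i)
    case (Suc i)
    then show ?case using k_pos by (cases "k = Suc i") (auto simp: child_offset_Suc child_count_def)
  qed simp
  then show ?thesis
    using child_offset_k child_offset_mono[of i k] by (cases "i \<le> k") auto
qed

lemma parent_bounds:
  assumes "1 \<le> j" "j < n"
  shows "child_offset (parent j) < j" "j \<le> child_offset (Suc (parent j))" "parent j < k" "parent j < j"
proof -
  have ex: "j \<le> child_offset (Suc (k - 1))" using assms child_offset_k k_pos by simp
  show "j \<le> child_offset (Suc (parent j))"
    unfolding parent_def by (rule LeastI[of "\<lambda>i. _ \<le> child_offset (Suc i)", OF ex])
  have "parent j \<le> k - 1"
    unfolding parent_def by (rule Least_le[of "\<lambda>i. _ \<le> child_offset (Suc i)", OF ex])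
  then show "parent j < k" using k_pos by simp
  show lt: "child_offset (parent j) < j"
  proof (cases "parent j")
    case (Suc i)
    then have "\<not> j \<le> child_offset (Suc i)"
      using not_less_Least[of i "\<lambda>i. j \<le> child_offset (Suc i)"] unfolding parent_def by simp
    then show ?thesis using Suc by simp
  qed (use assms in simp)
  show "parent j < j"
  proof (cases "parent j = 0")
    case False
    then have "parent j + 1 \<le> child_offset (parent j)"
      using child_offset_ge \<open>parent j < k\<close> by simp
    then show ?thesis using lt by simp
  qed (use assms in simp)
qed

lemma parent_eqI:
  assumes "child_offset i < j" "j \<le> child_offset (Suc i)"
  shows "parent j = i"
proof -
  have le: "parent j \<le> i" unfolding parent_def by (rule Least_le) (rule assms(2))
  have "j \<le> child_offset (Suc (parent j))" unfolding parent_def by (rule LeastI) (rule assms(2))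
  moreover have "child_offset (Suc (parent j)) \<le> child_offset i" if "parent j < i"
    using that by (intro child_offset_mono) simp
  ultimately show ?thesis using le assms(1) le_neq_implies_less by fastforce
qed

lemma parent_mono:
  assumes "j \<le> j'" "j' < n"
  shows "parent j \<le> parent j'"
proof -
  have "j' \<le> child_offset (Suc (k - 1))" using assms child_offset_k k_pos by simp
  then have "j' \<le> child_offset (Suc (parent j'))"
    unfolding parent_def by (rule LeastI[of "\<lambda>i. _ \<le> child_offset (Suc i)"])
  then show ?thesis unfolding parent_def using assms(1) by (intro Least_le) simp
qed

lemma card_children: "card {j. 1 \<le> j \<and> j < n \<and> parent j = i} = child_count i"
proof -
  have "{j. 1 \<le> j \<and> j < n \<and> parent j = i} = {Suc (child_offset i) .. child_offset (Suc i)}"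
  proof (intro equalityI subsetI)
    fix j assume "j \<in> {j. 1 \<le> j \<and> j < n \<and> parent j = i}"
    then show "j \<in> {Suc (child_offset i) .. child_offset (Suc i)}" using parent_bounds[of j] by auto
  next
    fix j assume j: "j \<in> {Suc (child_offset i) .. child_offset (Suc i)}"
    then have "j < n" using child_offset_le[of "Suc i"] k_less by auto
    then show "j \<in> {j. 1 \<le> j \<and> j < n \<and> parent j = i}" using j parent_eqI[of i j] by auto
  qed
  then show ?thesis by (simp add: child_offset_Suc)
qed

definition tree_edges :: "'a set set" where
  "tree_edges = {{xs!(parent j), xs!j} | j. 1 \<le> j \<and> j < n}"

lemma nth_eq_iff: "a < n \<Longrightarrow> b < n \<Longrightarrow> xs!a = xs!b \<longleftrightarrow> a = b"
  using distinct by (simp add: nth_eq_iff_index_eq)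

lemma tree_edges_nth_iff:
  assumes a: "a < n" and b: "b < n"
  shows "{xs!a, xs!b} \<in> tree_edges \<longleftrightarrow> (1 \<le> b \<and> a = parent b) \<or> (1 \<le> a \<and> b = parent a)"
proof
  assume "{xs!a, xs!b} \<in> tree_edges"
  then obtain j where j: "1 \<le> j" "j < n" "{xs!a, xs!b} = {xs!(parent j), xs!j}"
    unfolding tree_edges_def by blast
  have pj: "parent j < n" using parent_bounds[OF j(1,2)] j(2) by simp
  from j(3) have "(xs!a = xs!(parent j) \<and> xs!b = xs!j) \<or> (xs!a = xs!j \<and> xs!b = xs!(parent j))"
    by (simp add: doubleton_eq_iff)
  then have "(a = parent j \<and> b = j) \<or> (a = j \<and> b = parent j)"
    using nth_eq_iff[OF a pj] nth_eq_iff[OF b j(2)] nth_eq_iff[OF a j(2)] nth_eq_iff[OF b pj] by blast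
  then show "(1 \<le> b \<and> a = parent b) \<or> (1 \<le> a \<and> b = parent a)" using j(1) by blast
next
  assume "(1 \<le> b \<and> a = parent b) \<or> (1 \<le> a \<and> b = parent a)"
  then show "{xs!a, xs!b} \<in> tree_edges"
    unfolding tree_edges_def using a b by (auto simp: insert_commute)
qed

lemma tree_edges_memD:
  assumes "{v, w} \<in> tree_edges"
  shows "v \<in> set xs \<and> w \<in> set xs"
proof -
  obtain j where j: "1 \<le> j" "j < n" "{v, w} = {xs!(parent j), xs!j}"
    using assms unfolding tree_edges_def by blast
  then have "parent j < n" using parent_bounds[OF j(1,2)] by simp
  then show ?thesis using j by (auto simp: doubleton_eq_iff)
qed

lemma simple_graph_tree_edges: "simple_graph (set xs) tree_edges"
  unfolding simple_graph_def tree_edges_def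
proof (intro conjI ballI)
  fix e assume "e \<in> {{xs!(parent j), xs!j} | j. 1 \<le> j \<and> j < n}"
  then obtain j where j: "1 \<le> j" "j < n" "e = {xs!(parent j), xs!j}" by blast
  then have "parent j < j" "parent j < n" using parent_bounds[OF j(1,2)] by auto
  then show "\<exists>v w. e = {v, w} \<and> v \<noteq> w \<and> v \<in> set xs \<and> w \<in> set xs"
    using j nth_eq_iff[of "parent j" j] by (intro exI[of _ "xs!parent j"] exI[of _ "xs!j"]) auto
qed simp

lemma deg_tree_edges:
  assumes i: "i < n"
  shows "deg tree_edges (xs!i) = child_count i + (if i = 0 then 0 else 1)"
proof -
  let ?C = "{b. 1 \<le> b \<and> b < n \<and> parent b = i}" and ?P = "if 1 \<le> i then {parent i} else {}"
  have sub: "?C \<union> ?P \<subseteq> {..<n}" using parent_bounds[of i] i by auto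
  have "{w. {xs!i, w} \<in> tree_edges} = (\<lambda>b. xs!b) ` (?C \<union> ?P)"
  proof (intro equalityI subsetI)
    fix w assume w: "w \<in> {w. {xs!i, w} \<in> tree_edges}"
    then obtain b where "b < n" "w = xs!b" using tree_edges_memD by (auto simp: in_set_conv_nth)
    then show "w \<in> (\<lambda>b. xs!b) ` (?C \<union> ?P)" using w tree_edges_nth_iff[OF i] by auto
  next
    fix w assume "w \<in> (\<lambda>b. xs!b) ` (?C \<union> ?P)"
    then show "w \<in> {w. {xs!i, w} \<in> tree_edges}"
      using sub tree_edges_nth_iff[OF i] by (auto split: if_splits)
  qed
  moreover have "inj_on (\<lambda>b. xs!b) (?C \<union> ?P)"
    using sub nth_eq_iff by (auto simp: inj_on_def)
  moreover have "?C \<inter> ?P = {}"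
    using parent_bounds[of i] parent_bounds[of "parent i"] i by auto
  ultimately have "deg tree_edges (xs!i) = card ?C + card ?P"
    unfolding deg_def by (simp add: card_image card_Un_disjoint)
  then show ?thesis using card_children[of i] by simp
qed

lemma deg_interior: "i < k \<Longrightarrow> deg tree_edges (xs!i) = D!i"
  using deg_tree_edges[of i] k_less D_ge_2[of i] by (simp add: child_count_def)

lemma deg_leaf: "k \<le> i \<Longrightarrow> i < n \<Longrightarrow> deg tree_edges (xs!i) = 1"
  using deg_tree_edges[of i] k_pos by (simp add: child_count_def)

abbreviation depth :: "nat \<Rightarrow> nat" where
  "depth \<equiv> parent_depth parent"

lemma depth_0 [simp]: "depth 0 = 0"
  by (simp add: parent_depth.simps)

lemma depth_parent: "1 \<le> j \<Longrightarrow> j < n \<Longrightarrow> depth j = Suc (depth (parent j))"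
  using parent_bounds[of j] by (subst parent_depth.simps) simp

lemma walk_to_root:
  "j < n \<Longrightarrow> \<exists>ps. is_walk tree_edges ps \<and> hd ps = xs!j \<and> last ps = xs!0 \<and> length ps = Suc (depth j)"
proof (induction j rule: less_induct)
  case (less j)
  show ?case
  proof (cases "j = 0")
    case True
    then show ?thesis by (intro exI[of _ "[xs!0]"]) (simp add: is_walk_def)
  next
    case False
    then have j: "1 \<le> j" "parent j < j" using parent_bounds[of j] less.prems by auto
    then obtain ps where ps: "is_walk tree_edges ps" "hd ps = xs!(parent j)" "last ps = xs!0"
      "length ps = Suc (depth (parent j))"
      using less.IH[of "parent j"] less.prems by auto
    have "{xs!j, hd ps} \<in> tree_edges"
      using ps(2) j less.prems tree_edges_nth_iff[of j "parent j"] by simp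
    then have "is_walk tree_edges (xs!j # ps)" by (rule is_walk_Cons[OF ps(1)])
    moreover have "ps \<noteq> []" using ps(1) by (simp add: is_walk_def)
    ultimately show ?thesis
      using ps depth_parent[OF j(1) less.prems] by (intro exI[of _ "xs!j # ps"]) simp
  qed
qed

lemma depth_le_walk:
  "is_walk tree_edges ps \<Longrightarrow> j < n \<Longrightarrow> hd ps = xs!j \<Longrightarrow> last ps = xs!0 \<Longrightarrow> depth j < length ps"
proof (induction ps arbitrary: j)
  case Nil
  then show ?case by (simp add: is_walk_def)
next
  case (Cons x ps)
  show ?case
  proof (cases "ps = []")
    case True
    then have "xs!j = xs!0" using Cons.prems by simp
    then have "j = 0" using Cons.prems(2) nth_eq_iff[of j 0] by fastforce
    then show ?thesis by simp
  next
    case False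
    have "is_walk tree_edges ps" and edge: "{xs!j, hd ps} \<in> tree_edges"
      using Cons.prems(1,3) False unfolding is_walk_def by (auto simp: hd_conv_nth)
    moreover obtain b where b: "b < n" "hd ps = xs!b"
      using tree_edges_memD[OF edge] by (metis in_set_conv_nth)
    ultimately have "depth b < length ps" using Cons.IH Cons.prems(4) False by simp
    moreover have "(1 \<le> j \<and> b = parent j) \<or> (1 \<le> b \<and> j = parent b)"
      using edge b tree_edges_nth_iff[OF Cons.prems(2) b(1)] by auto
    then have "depth j \<le> Suc (depth b)"
      using depth_parent[OF _ Cons.prems(2)] depth_parent[OF _ b(1)] by auto
    ultimately show ?thesis by simp
  qed
qed

lemma gdist_root: "j < n \<Longrightarrow> gdist tree_edges (xs!j) (xs!0) = depth j"
  unfolding gdist_def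
proof (rule Least_equality)
  assume "j < n"
  then show "\<exists>ps. is_walk tree_edges ps \<and> length ps = Suc (depth j) \<and> hd ps = xs!j \<and> last ps = xs!0"
    using walk_to_root by blast
next
  fix m assume "j < n" "\<exists>ps. is_walk tree_edges ps \<and> length ps = Suc m \<and> hd ps = xs!j \<and> last ps = xs!0"
  then show "depth j \<le> m" using depth_le_walk by fastforce
qed

lemma depth_mono: "i \<le> j \<Longrightarrow> j < n \<Longrightarrow> depth i \<le> depth j"
proof (induction j arbitrary: i rule: less_induct)
  case (less j)
  show ?case
  proof (cases "i = 0")
    case False
    then have "1 \<le> i" "1 \<le> j" "parent i \<le> parent j" "parent j < j"
      using less.prems parent_mono parent_bounds[of j] by auto
    then show ?thesis
      using less.IH[of "parent j" "parent i"] less.prems depth_parent[of i] depth_parent[of j] by simp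
  qed simp
qed

lemma connected_graph_tree_edges: "connected_graph (set xs) tree_edges"
  using walk_to_root by (intro connected_graph_if_walks_to) (auto simp: in_set_conv_nth)

lemma no_cycle_tree_edges: "\<not> (\<exists>cs. set cs \<subseteq> set xs \<and> is_cycle tree_edges cs)"
proof
  assume "\<exists>cs. set cs \<subseteq> set xs \<and> is_cycle tree_edges cs"
  then obtain cs where cs_xs: "set cs \<subseteq> set xs" and cyc: "is_cycle tree_edges cs" by blast
  define L where "L = length cs"
  have L3: "3 \<le> L" and dist_cs: "distinct cs"
    and cs_edge: "\<And>i. i < L \<Longrightarrow> {cs!i, cs!((i + 1) mod L)} \<in> tree_edges"
    using cyc unfolding is_cycle_def L_def by auto
  \<comment> \<open>the cycle vertex of largest position in xs would have two distinct neighbours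
    of smaller position, but only its parent qualifies\<close>
  define m where "m = Max {i. i < n \<and> xs!i \<in> set cs}"
  have "cs!0 \<in> set cs" using L3 unfolding L_def by (intro nth_mem) linarith
  then obtain i where "i < n" "xs!i \<in> set cs" using cs_xs by (metis in_set_conv_nth subsetD)
  then have "{i. i < n \<and> xs!i \<in> set cs} \<noteq> {}" by blast
  then have m: "m < n" "xs!m \<in> set cs" and m_max: "\<And>i. i < n \<Longrightarrow> xs!i \<in> set cs \<Longrightarrow> i \<le> m"
    unfolding m_def using Max_in[of "{i. i < n \<and> xs!i \<in> set cs}"] by auto
  obtain q where q: "q < L" "cs!q = xs!m" using m(2) unfolding L_def by (auto simp: in_set_conv_nth)
  have to_parent: "cs!r = xs!(parent m)" if r: "r < L" "r \<noteq> q" "{cs!q, cs!r} \<in> tree_edges" for r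
  proof -
    obtain b where b: "b < n" "cs!r = xs!b"
      using cs_xs r(1) unfolding L_def by (metis in_set_conv_nth nth_mem subsetD)
    have "b \<le> m" using m_max b r(1) unfolding L_def by (metis nth_mem)
    moreover have "b \<noteq> m" using b q r dist_cs unfolding L_def by (metis nth_eq_iff_index_eq)
    moreover have "(1 \<le> b \<and> m = parent b) \<or> (1 \<le> m \<and> b = parent m)"
      using tree_edges_nth_iff[OF m(1) b(1)] r(3) q(2) b(2) by simp
    ultimately show ?thesis using parent_bounds[of b] b by auto
  qed
  define nx where "nx = (q + 1) mod L"
  define pv where "pv = (if q = 0 then L - 1 else q - 1)"
  have nx: "nx < L" "nx \<noteq> q" and pv: "pv < L" "pv \<noteq> q" "(pv + 1) mod L = q" and "nx \<noteq> pv"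
    using q(1) L3 unfolding nx_def pv_def by (auto simp: mod_Suc)
  have "cs!nx = cs!pv"
    using to_parent[OF nx] to_parent[OF pv(1,2)] cs_edge[OF q(1)] cs_edge[OF pv(1)] pv(3)
    unfolding nx_def by (simp add: insert_commute)
  then show False using \<open>nx \<noteq> pv\<close> nx pv dist_cs unfolding L_def by (simp add: nth_eq_iff_index_eq)
qed

lemma is_tree_tree_edges: "is_tree (set xs) tree_edges"
  unfolding is_tree_def
  using simple_graph_tree_edges connected_graph_tree_edges no_cycle_tree_edges k_less by auto

lemma deg_ge_2_iff: "i < n \<Longrightarrow> 2 \<le> deg tree_edges (xs!i) \<longleftrightarrow> i < k"
  using deg_interior[of i] deg_leaf[of i] D_ge_2[of i] by (cases "i < k") auto

lemma deg_eq_1_iff: "i < n \<Longrightarrow> deg tree_edges (xs!i) = 1 \<longleftrightarrow> k \<le> i"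
  using deg_interior[of i] deg_leaf[of i] D_ge_2[of i] by (cases "i < k") auto

lemma interior_tree_edges: "Defs.interior (set xs) tree_edges = set (take k xs)"
proof (intro equalityI subsetI)
  fix v assume "v \<in> Defs.interior (set xs) tree_edges"
  then obtain i where i: "i < n" "v = xs!i" "2 \<le> deg tree_edges (xs!i)"
    unfolding Defs.interior_def by (auto simp: in_set_conv_nth)
  then have "take k xs ! i = v" "i < length (take k xs)" using deg_ge_2_iff by auto
  then show "v \<in> set (take k xs)" by (metis nth_mem)
next
  fix v assume "v \<in> set (take k xs)"
  then obtain i where "i < k" "v = xs!i" using k_less by (auto simp: in_set_conv_nth)
  then show "v \<in> Defs.interior (set xs) tree_edges"
    unfolding Defs.interior_def using deg_ge_2_iff k_less by auto
qed

lemma boundary_tree_edges: "boundary (set xs) tree_edges = set (drop k xs)"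
proof (intro equalityI subsetI)
  fix v assume "v \<in> boundary (set xs) tree_edges"
  then obtain i where i: "i < n" "v = xs!i" "deg tree_edges (xs!i) = 1"
    unfolding boundary_def by (auto simp: in_set_conv_nth)
  then have "drop k xs ! (i - k) = v" "i - k < length (drop k xs)" using deg_eq_1_iff by auto
  then show "v \<in> set (drop k xs)" by (metis nth_mem)
next
  fix v assume "v \<in> set (drop k xs)"
  then obtain j where "j < n - k" "v = xs!(k + j)" by (auto simp: in_set_conv_nth)
  then show "v \<in> boundary (set xs) tree_edges"
    unfolding boundary_def using deg_eq_1_iff[of "k + j"] by auto
qed

lemma tree_with_boundary_tree_edges: "tree_with_boundary (set xs) tree_edges"
proof -
  have "set xs = set (take k xs) \<union> set (drop k xs)" by (metis append_take_drop_id set_append)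
  moreover have "set (drop k xs) \<noteq> {}" "set (take k xs) \<noteq> {}" using k_less k_pos by auto
  ultimately show ?thesis unfolding tree_with_boundary_def
    using is_tree_tree_edges boundary_tree_edges interior_tree_edges by (simp add: Un_commute)
qed

lemma is_child_root_nth:
  assumes "i < n" "is_child tree_edges (xs!0) (xs!i) c"
  shows "\<exists>j<n. c = xs!j \<and> 1 \<le> j \<and> parent j = i"
proof -
  have edge: "{xs!i, c} \<in> tree_edges"
    and dist: "gdist tree_edges c (xs!0) = gdist tree_edges (xs!i) (xs!0) + 1"
    using assms(2) unfolding is_child_def by auto
  obtain j where j: "j < n" "c = xs!j" using tree_edges_memD[OF edge] by (metis in_set_conv_nth)
  have "depth j = Suc (depth i)" using dist gdist_root j assms(1) by simp
  moreover have "(1 \<le> j \<and> i = parent j) \<or> (1 \<le> i \<and> j = parent i)"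
    using tree_edges_nth_iff[OF assms(1) j(1)] edge j by simp
  ultimately show ?thesis using depth_parent[OF _ assms(1)] j by auto
qed

lemma prec_nth: "prec xs v w \<longleftrightarrow> (\<exists>i j. i < j \<and> j < n \<and> v = xs!i \<and> w = xs!j)"
  unfolding prec_def by auto

lemma SLO_star_ordering_tree_edges: "SLO_star_ordering (set xs) tree_edges (xs!0) xs"
  unfolding SLO_star_ordering_def SLO_ordering_def
proof (intro conjI allI impI)
  fix v w assume "prec xs v w"
  then obtain i j where "i < j" "j < n" "v = xs!i" "w = xs!j" unfolding prec_nth by blast
  then show "gdist tree_edges v (xs!0) \<le> gdist tree_edges w (xs!0)"
    using gdist_root depth_mono by simp
next
  fix v1 v2 c1 c2
  assume a: "prec xs v1 v2 \<and> is_child tree_edges (xs!0) v1 c1 \<and> is_child tree_edges (xs!0) v2 c2"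
  then obtain i1 i2 where i: "i1 < i2" "i2 < n" "v1 = xs!i1" "v2 = xs!i2" unfolding prec_nth by blast
  obtain j1 where j1: "j1 < n" "c1 = xs!j1" "parent j1 = i1"
    using is_child_root_nth[of i1 c1] a i by auto
  obtain j2 where j2: "j2 < n" "c2 = xs!j2" "parent j2 = i2"
    using is_child_root_nth[of i2 c2] a i by auto
  have "j1 < j2"
  proof (rule ccontr)
    assume "\<not> j1 < j2"
    then have "parent j2 \<le> parent j1" using parent_mono j1(1) by simp
    then show False using i j1 j2 by simp
  qed
  then show "prec xs c1 c2" unfolding prec_nth using j1 j2 by blast
next
  fix v w assume "prec xs v w \<and> v \<in> boundary (set xs) tree_edges"
  then obtain i j where "i < j" "j < n" "v = xs!i" "w = xs!j" "deg tree_edges (xs!i) = 1"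
    unfolding prec_nth boundary_def by auto
  then show "w \<in> boundary (set xs) tree_edges"
    unfolding boundary_def using deg_eq_1_iff by auto
next
  fix v w
  assume "v \<in> Defs.interior (set xs) tree_edges \<and> w \<in> Defs.interior (set xs) tree_edges \<and> prec xs v w"
  then obtain i j where "i < j" "j < n" "v = xs!i" "w = xs!j" "2 \<le> deg tree_edges (xs!j)"
    unfolding prec_nth Defs.interior_def by auto
  then show "deg tree_edges v \<le> deg tree_edges w"
    using deg_ge_2_iff deg_interior sorted_D length_D by (simp add: sorted_nth_mono)
qed (use distinct in auto)

lemma SLO_star_tree_tree_edges: "SLO_star_tree (set xs) tree_edges"
  unfolding SLO_star_tree_def using tree_with_boundary_tree_edges SLO_star_ordering_tree_edges k_less
  by (metis gr_zeroI less_zeroE nth_mem)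

lemma degree_sequence_tree_edges:
  "degree_sequence (set xs) tree_edges = mset D + replicate_mset (n - k) 1"
proof -
  have "map (deg tree_edges) (take k xs) = D"
    by (rule nth_equalityI) (use length_D k_less deg_interior in auto)
  moreover have "map (deg tree_edges) (drop k xs) = replicate (n - k) 1"
    by (rule nth_equalityI) (use k_less deg_leaf in auto)
  moreover have "degree_sequence (set xs) tree_edges
      = mset (map (deg tree_edges) (take k xs)) + mset (map (deg tree_edges) (drop k xs))"
    unfolding degree_sequence_def using distinct
    by (simp add: mset_set_set flip: image_mset_union mset_append)
  ultimately show ?thesis by simp
qed

lemma card_arcs_leaving_prefix:
  assumes ts: "1 \<le> t" "t \<le> s" "s \<le> k"
  shows "card (arcs tree_edges (set (take t xs)) (set xs - set (take s xs))) \<le> Suc (child_offset t) - s"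
proof -
  \<comment> \<open>such an arc runs from a parent to a child, and the children of the first t vertices
    occupy the positions up to child_offset t\<close>
  have "arcs tree_edges (set (take t xs)) (set xs - set (take s xs))
      \<subseteq> (\<lambda>j. (xs!(parent j), xs!j)) ` {s..child_offset t}"
  proof
    fix p assume "p \<in> arcs tree_edges (set (take t xs)) (set xs - set (take s xs))"
    then obtain u w where p: "p = (u, w)" "u \<in> set (take t xs)" "w \<in> set xs"
      "w \<notin> set (take s xs)" "{u, w} \<in> tree_edges"
      unfolding arcs_def by blast
    obtain i where i: "i < t" "u = xs!i" using p(2) by (auto simp: in_set_conv_nth)
    obtain j where j: "j < n" "w = xs!j" using p(3) by (auto simp: in_set_conv_nth)
    have "\<not> j < s" using p(4) distinct_nth_in_set_take_iff[OF distinct j(1)] j(2) by simp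
    have "i < n" using i(1) ts k_less by simp
    then have "1 \<le> j \<and> parent j = i"
      using tree_edges_nth_iff[of i j] p(5) i j \<open>\<not> j < s\<close> parent_bounds[of i] ts by auto
    moreover have "child_offset (Suc (parent j)) \<le> child_offset t"
      using calculation i(1) by (intro child_offset_mono) simp
    ultimately have "j \<in> {s..child_offset t}" using parent_bounds[of j] j(1) \<open>\<not> j < s\<close> by auto
    then show "p \<in> (\<lambda>j. (xs!(parent j), xs!j)) ` {s..child_offset t}"
      using p(1) i j \<open>1 \<le> j \<and> parent j = i\<close> by auto
  qed
  then have "card (arcs tree_edges (set (take t xs)) (set xs - set (take s xs)))
      \<le> card ((\<lambda>j. (xs!(parent j), xs!j)) ` {s..child_offset t})"
    by (intro card_mono) auto
  also have "\<dots> \<le> card {s..child_offset t}" by (rule card_image_le) simp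
  finally show ?thesis by simp
qed

end

section \<open>Layer-cake decomposition of the Dirichlet energy\<close>

text \<open>For \<open>g \<ge> 0\<close> supported on the distinct list \<open>ws\<close> and nonincreasing along it, \<open>g\<close> is the
  nonnegative combination, with weights \<open>level_gap ws g t\<close>, of the indicators of the prefix sets
  \<open>set (take t ws)\<close>. Hence the energy \<open>\<Sum> (g u - g w)\<^sup>2\<close> over the arcs of a graph is a
  nonnegative combination of the numbers \<open>cut_count\<close> of arcs from a prefix set to the
  complement of a larger one.\<close>

definition level_gap :: "'a list \<Rightarrow> ('a \<Rightarrow> real) \<Rightarrow> nat \<Rightarrow> real" where
  "level_gap ws g t = (if t - 1 < length ws then g (ws!(t - 1)) else 0) - (if t < length ws then g (ws!t) else 0)"

definition cut_count :: "'a set set \<Rightarrow> 'a set \<Rightarrow> 'a list \<Rightarrow> nat \<Rightarrow> nat \<Rightarrow> nat" where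
  "cut_count E V ws t s = card (arcs E (set (take (min t s) ws)) (V - set (take (max t s) ws)))"

context
  fixes ws :: "'a list" and g :: "'a \<Rightarrow> real"
  assumes distinct_ws: "distinct ws" and g_supp: "\<And>v. v \<notin> set ws \<Longrightarrow> g v = 0"
    and g_antimono: "\<And>i j. i \<le> j \<Longrightarrow> j < length ws \<Longrightarrow> g (ws!j) \<le> g (ws!i)"
    and g_nonneg: "\<And>v. g v \<ge> 0"
begin

lemma level_gap_nonneg: "t \<in> {1..length ws} \<Longrightarrow> level_gap ws g t \<ge> 0"
  unfolding level_gap_def using g_antimono g_nonneg by auto

lemma layer_decomposition:
  "g v = (\<Sum>t\<in>{1..length ws}. level_gap ws g t * of_bool (v \<in> set (take t ws)))"
proof (cases "v \<in> set ws")
  case False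
  then have "v \<notin> set (take t ws)" for t using set_take_subset by fastforce
  then show ?thesis using g_supp[OF False] by simp
next
  case True
  then obtain r where r: "r < length ws" "v = ws!r" by (auto simp: in_set_conv_nth)
  define h where "h t = (if t < length ws then g (ws!t) else 0)" for t
  have "(\<Sum>t\<in>{1..length ws}. level_gap ws g t * of_bool (v \<in> set (take t ws)))
      = (\<Sum>t\<in>{1..length ws}. if r < t then level_gap ws g t else 0)"
    using distinct_nth_in_set_take_iff[OF distinct_ws r(1)] r(2) by (intro sum.cong) auto
  also have "\<dots> = (\<Sum>t\<in>{t\<in>{1..length ws}. r < t}. level_gap ws g t)"
    by (rule sum.inter_filter[symmetric]) simp
  also have "\<dots> = (\<Sum>t\<in>{Suc r..length ws}. level_gap ws g t)" by (rule sum.cong) auto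
  also have "\<dots> = - (\<Sum>t\<in>{Suc r..length ws}. h t - h (t - 1))"
    unfolding level_gap_def h_def sum_negf[symmetric] by (intro sum.cong) auto
  also have "\<dots> = g v" using sum_telescope''[of r "length ws" h] r by (simp add: h_def)
  finally show ?thesis by simp
qed

lemma sq_diff_layers:
  "(g u - g w)\<^sup>2 = (\<Sum>t\<in>{1..length ws}. \<Sum>s\<in>{1..length ws}. level_gap ws g t * level_gap ws g s *
      (of_bool (u \<in> set (take (min t s) ws) \<and> w \<notin> set (take (max t s) ws))
     + of_bool (w \<in> set (take (min t s) ws) \<and> u \<notin> set (take (max t s) ws))))"
proof -
  let ?X = "\<lambda>t. set (take t ws)"
  define c :: "nat \<Rightarrow> real" where "c t = of_bool (u \<in> ?X t \<and> w \<notin> ?X t) - of_bool (w \<in> ?X t \<and> u \<notin> ?X t)" for t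
  \<comment> \<open>the prefix sets are nested, so u and w cannot be separated in opposite directions\<close>
  have c_mult: "c t * c s = of_bool (u \<in> ?X (min t s) \<and> w \<notin> ?X (max t s))
      + of_bool (w \<in> ?X (min t s) \<and> u \<notin> ?X (max t s))" for t s
    using set_take_subset_set_take[of t s ws] set_take_subset_set_take[of s t ws]
    unfolding c_def by (cases "t \<le> s") (auto simp: min_def max_def)
  have "g u - g w = (\<Sum>t\<in>{1..length ws}. level_gap ws g t * of_bool (u \<in> ?X t)
      - level_gap ws g t * of_bool (w \<in> ?X t))"
    by (subst (1 2) layer_decomposition) (simp add: sum_subtractf)
  also have "\<dots> = (\<Sum>t\<in>{1..length ws}. level_gap ws g t * c t)"
    by (intro sum.cong refl) (simp add: c_def of_bool_def algebra_simps)
  finally have "g u - g w = (\<Sum>t\<in>{1..length ws}. level_gap ws g t * c t)" .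
  then show ?thesis
    by (simp add: power2_eq_square sum_product c_mult[symmetric] mult_ac)
qed

lemma sum_arcs_sq_diff_eq:
  assumes "finite V" "set ws \<subseteq> V"
  shows "(\<Sum>(u, w)\<in>arcs E V V. (g u - g w)\<^sup>2)
    = 2 * (\<Sum>t\<in>{1..length ws}. \<Sum>s\<in>{1..length ws}.
        level_gap ws g t * level_gap ws g s * real (cut_count E V ws t s))"
proof -
  let ?A = "arcs E V V" and ?X = "\<lambda>t. set (take t ws)"
  have fA: "finite ?A" using assms(1) by (simp add: finite_arcs)
  have count: "(\<Sum>(u, w)\<in>?A. of_bool (u \<in> ?X (min t s) \<and> w \<notin> ?X (max t s))) = real (cut_count E V ws t s)"
    for t s
  proof -
    have "?A \<inter> {(u, w). u \<in> ?X (min t s) \<and> w \<notin> ?X (max t s)} = arcs E (?X (min t s)) (V - ?X (max t s))"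
      using assms(2) set_take_subset[of "min t s" ws] unfolding arcs_def by auto
    then show ?thesis using fA unfolding cut_count_def by (simp add: case_prod_unfold)
  qed
  have "(\<Sum>(u, w)\<in>?A. (g u - g w)\<^sup>2) = (\<Sum>t\<in>{1..length ws}. \<Sum>s\<in>{1..length ws}.
      level_gap ws g t * level_gap ws g s * ((\<Sum>(u, w)\<in>?A. of_bool (u \<in> ?X (min t s) \<and> w \<notin> ?X (max t s)))
      + (\<Sum>(u, w)\<in>?A. of_bool (w \<in> ?X (min t s) \<and> u \<notin> ?X (max t s)))))"
    unfolding sq_diff_layers sum_distrib_left sum.distrib[symmetric] case_prod_unfold
    by (subst sum.swap, subst (2) sum.swap) (simp add: algebra_simps sum.distrib)
  also have "\<dots> = (\<Sum>t\<in>{1..length ws}. \<Sum>s\<in>{1..length ws}.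
      level_gap ws g t * level_gap ws g s * (2 * real (cut_count E V ws t s)))"
    by (simp add: count sum_arcs_swap[of "\<lambda>w u. of_bool (w \<in> ?X (min _ _) \<and> u \<notin> ?X (max _ _))"])
  finally show ?thesis by (simp add: sum_distrib_left algebra_simps)
qed

lemma sum_arcs_sq_diff_mono:
  assumes "finite V" "set ws \<subseteq> V"
    and cut_le: "\<And>t s. t \<in> {1..length ws} \<Longrightarrow> s \<in> {1..length ws} \<Longrightarrow> cut_count E V ws t s \<le> cut_count E' V ws t s"
  shows "(\<Sum>(u, w)\<in>arcs E V V. (g u - g w)\<^sup>2) \<le> (\<Sum>(u, w)\<in>arcs E' V V. (g u - g w)\<^sup>2)"
  unfolding sum_arcs_sq_diff_eq[OF assms(1,2)]
  using cut_le level_gap_nonneg by (auto intro!: sum_mono mult_left_mono)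

end

section \<open>Rearranging a tree into an SLO* tree\<close>

lemma sum_list_take_insort_le:
  fixes xs :: "nat list"
  assumes "sorted xs" "1 \<le> t"
  shows "sum_list (take t (insort x xs)) \<le> x + sum_list (take (t - 1) xs)"
  using assms
proof (induction xs arbitrary: t)
  case (Cons y xs)
  show ?case
  proof (cases "x \<le> y")
    case False
    then show ?thesis
      using Cons.IH[of "t - 1"] Cons.prems by (cases t; cases "t - 1") auto
  qed (use Cons.prems in \<open>cases t; simp\<close>)
qed (cases t; simp)

lemma sum_list_take_sort_le:
  fixes xs :: "nat list"
  shows "sum_list (take t (sort xs)) \<le> sum_list (take t xs)"
proof (induction xs arbitrary: t)
  case (Cons x xs)
  show ?case
  proof (cases t)
    case (Suc t')
    have "sum_list (take t (sort (x # xs))) \<le> x + sum_list (take t' (sort xs))"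
      using sum_list_take_insort_le[of "sort xs" t x] Suc by simp
    also have "\<dots> \<le> x + sum_list (take t' xs)" using Cons.IH by simp
    finally show ?thesis using Suc by simp
  qed simp
qed simp

context breadth_first_tree
begin

lemma card_arcs_leaving_prefix_le:
  assumes tree: "is_tree (set xs) E" and D_eq: "D = sort (map (deg E) (take k xs))"
    and ts: "1 \<le> t" "t \<le> s" "s \<le> k"
  shows "card (arcs tree_edges (set (take t xs)) (set xs - set (take s xs)))
    \<le> card (arcs E (set (take t xs)) (set xs - set (take s xs)))"
proof -
  let ?cut = "card (arcs E (set (take t xs)) (set xs - set (take s xs)))"
  have "child_offset t + (t - 1) = sum_list (take t D)"
    using child_offset_eq_sum_D[of t] ts length_D by (simp add: sum_list_sum_nth atLeast0LessThan)
  \<comment> \<open>this is where the interior degrees are assigned in increasing order\<close>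
  also have "\<dots> \<le> sum_list (take t (map (deg E) (take k xs)))"
    unfolding D_eq by (rule sum_list_take_sort_le)
  also have "\<dots> = (\<Sum>v\<in>set (take t xs). deg E v)"
    using ts distinct by (simp add: sum_list_distinct_conv_sum_set take_map min_absorb1)
  also have "\<dots> \<le> ?cut + (card (set (take t xs)) - 1) + (card (set (take s xs)) - 1)"
    using ts k_less by (intro tree_sum_deg_le_cut[OF tree])
      (auto simp: set_take_subset_set_take set_take_subset)
  also have "\<dots> = ?cut + (t - 1) + (s - 1)"
    using ts k_less distinct by (simp add: distinct_card)
  finally show ?thesis using card_arcs_leaving_prefix[OF ts] ts by linarith
qed

end

lemma tree_with_boundary_sum_deg_interior:
  assumes "tree_with_boundary V E"
  shows "(\<Sum>v\<in>Defs.interior V E. deg E v) + 2 = card V + card (Defs.interior V E)"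
proof -
  let ?I = "Defs.interior V E" and ?B = "boundary V E"
  have tree: "is_tree V E" and V: "V = ?B \<union> ?I" and "V \<noteq> {}"
    using assms unfolding tree_with_boundary_def is_tree_def by auto
  have fV: "finite V" using tree by (simp add: is_tree_def simple_graph_def)
  have disj: "?B \<inter> ?I = {}" unfolding Defs.interior_def boundary_def by auto
  have fin: "finite ?B" "finite ?I" using fV V by (metis finite_Un)+
  have "(\<Sum>v\<in>V. deg E v) = (\<Sum>v\<in>?B. deg E v) + (\<Sum>v\<in>?I. deg E v)"
    using V fin disj by (metis sum.union_disjoint)
  moreover have "(\<Sum>v\<in>?B. deg E v) = card ?B" by (simp add: boundary_def)
  moreover have "card V = card ?B + card ?I" using V fin disj by (metis card_Un_disjoint)
  moreover have "(\<Sum>v\<in>V. deg E v) + 2 = 2 * card V"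
    using tree_sum_deg[OF tree] \<open>V \<noteq> {}\<close> fV by (cases "card V") auto
  ultimately show ?thesis by linarith
qed

lemma breadth_first_tree_of_tree_with_boundary:
  assumes twb: "tree_with_boundary V E"
    and ws: "distinct ws" "set ws = Defs.interior V E" and ls: "distinct ls" "set ls = boundary V E"
  shows "breadth_first_tree (ws @ ls) (sort (map (deg E) ws)) (length ws)"
proof
  let ?I = "Defs.interior V E" and ?B = "boundary V E"
  have fV: "finite V" and V: "V = ?B \<union> ?I" and "?B \<noteq> {}" "?I \<noteq> {}"
    using twb unfolding tree_with_boundary_def is_tree_def simple_graph_def by auto
  moreover have disj: "?B \<inter> ?I = {}" unfolding Defs.interior_def boundary_def by auto
  ultimately show "distinct (ws @ ls)" "1 \<le> length ws" "length ws < length (ws @ ls)"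
    using ws ls by (auto simp: Suc_le_eq)
  show "length (sort (map (deg E) ws)) = length ws" by simp
  show "sorted (sort (map (deg E) ws))" by simp
  show "2 \<le> sort (map (deg E) ws) ! i" if "i < length ws" for i
  proof -
    have "sort (map (deg E) ws) ! i \<in> deg E ` set ws"
      using that by (metis length_map length_sort nth_mem set_map set_sort)
    then show ?thesis using ws(2) by (auto simp: Defs.interior_def)
  qed
  have "card V = card (?B \<union> ?I)" using arg_cong[where f = card, OF V] .
  also have "\<dots> = length (ws @ ls)"
    using ws(1) ls(1) disj unfolding ws(2)[symmetric] ls(2)[symmetric]
    by (simp add: card_Un_disjoint distinct_card)
  finally have "card V = length (ws @ ls)" .
  moreover have "sum_list (sort (map (deg E) ws)) = sum_list (map (deg E) ws)"
    by (metis mset_sort sum_mset_sum_list)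
  moreover have "sum_list (map (deg E) ws) = (\<Sum>v\<in>?I. deg E v)"
    using ws by (simp add: sum_list_distinct_conv_sum_set)
  moreover have "card ?I = length ws" using distinct_card[OF ws(1)] ws(2) by simp
  ultimately show "sum_list (sort (map (deg E) ws)) + 2 = length (ws @ ls) + length ws"
    using tree_with_boundary_sum_deg_interior[OF twb] by simp
qed

lemma SLO_star_rearrangement:
  assumes twb: "tree_with_boundary V E" and ws: "distinct ws" "set ws = Defs.interior V E"
  obtains E' where "tree_with_boundary V E'" "degree_sequence V E' = degree_sequence V E"
    "SLO_star_tree V E'" "Defs.interior V E' = Defs.interior V E"
    "\<And>t s. t \<in> {1..length ws} \<Longrightarrow> s \<in> {1..length ws} \<Longrightarrow> cut_count E' V ws t s \<le> cut_count E V ws t s"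
proof -
  have fV: "finite V" and V: "V = boundary V E \<union> Defs.interior V E" and tree: "is_tree V E"
    using twb unfolding tree_with_boundary_def is_tree_def simple_graph_def by auto
  obtain ls where ls: "distinct ls" "set ls = boundary V E"
    using finite_distinct_list[of "boundary V E"] fV by (auto simp: boundary_def)
  define xs where "xs = ws @ ls"
  interpret T: breadth_first_tree xs "sort (map (deg E) ws)" "length ws"
    unfolding xs_def by (rule breadth_first_tree_of_tree_with_boundary[OF twb ws ls])
  have set_xs: "set xs = V" using V ws ls by (auto simp: xs_def)
  have take_xs: "take t xs = take t ws" if "t \<le> length ws" for t
    using that by (simp add: xs_def)
  have "degree_sequence V E = mset (map (deg E) xs)"
    unfolding degree_sequence_def set_xs[symmetric] using T.distinct by (simp add: mset_set_set)
  also have "\<dots> = mset (map (deg E) ws) + mset (map (deg E) ls)" by (simp add: xs_def)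
  also have "map (deg E) ls = replicate (length ls) 1"
    using ls(2) by (intro replicate_eqI) (auto simp: boundary_def)
  finally have "degree_sequence V T.tree_edges = degree_sequence V E"
    using T.degree_sequence_tree_edges set_xs by (simp add: xs_def)
  moreover have "Defs.interior V T.tree_edges = Defs.interior V E"
    using T.interior_tree_edges set_xs take_xs[of "length ws"] ws(2) by simp
  moreover have "cut_count T.tree_edges V ws t s \<le> cut_count E V ws t s"
    if "t \<in> {1..length ws}" "s \<in> {1..length ws}" for t s
  proof -
    have "card (arcs T.tree_edges (set (take (min t s) xs)) (set xs - set (take (max t s) xs)))
        \<le> card (arcs E (set (take (min t s) xs)) (set xs - set (take (max t s) xs)))"
      using that tree set_xs by (intro T.card_arcs_leaving_prefix_le) (auto simp: take_xs)
    then show ?thesis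
      unfolding cut_count_def using that set_xs take_xs[of "min t s"] take_xs[of "max t s"]
      by (simp add: min_le_iff_disj)
  qed
  ultimately show thesis
    using that T.tree_with_boundary_tree_edges T.SLO_star_tree_tree_edges set_xs by simp
qed

lemma lambda_min_abs_eigenvector:
  assumes twb: "tree_with_boundary V E"
  obtains g where "\<And>v. g v \<ge> 0" "\<And>v. v \<notin> Defs.interior V E \<Longrightarrow> g v = 0"
    "interior_inner V E g g > 0"
    "(\<Sum>(u, w)\<in>arcs E V V. (g u - g w)\<^sup>2) \<le> 2 * lambda_min V E * interior_inner V E g g"
proof -
  let ?I = "Defs.interior V E"
  have simple: "simple_graph V E" and fV: "finite V" and "?I \<noteq> {}"
    using twb unfolding tree_with_boundary_def is_tree_def simple_graph_def by auto
  then obtain f v where v: "v \<in> ?I" "f v \<noteq> 0"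
    and f_eig: "\<forall>v\<in>?I. dirichlet_op V E f v = lambda_min V E * f v"
    using lambda_min_eigenvalue unfolding dirichlet_eigenvalues_def by blast
  define f' where "f' v = (if v \<in> ?I then f v else 0)" for v
  define g where "g v = \<bar>f' v\<bar>" for v
  have f'_supp: "\<And>v. v \<notin> ?I \<Longrightarrow> f' v = 0" and g_supp: "\<And>v. v \<notin> ?I \<Longrightarrow> g v = 0"
    by (simp_all add: f'_def g_def)
  have inner: "interior_inner V E g g = interior_inner V E f f"
    unfolding interior_inner_def g_def f'_def by (simp add: abs_mult_self_eq)
  have "(\<Sum>(u, w)\<in>arcs E V V. (g u - g w)\<^sup>2) \<le> (\<Sum>(u, w)\<in>arcs E V V. (f' u - f' w)\<^sup>2)"
    unfolding g_def by (intro sum_mono) (auto intro: abs_le_square_iff[THEN iffD1, OF abs_triangle_ineq3])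
  also have "\<dots> = 2 * dirichlet_form V E f' f'"
    by (rule dirichlet_form_eq_sum_arcs[OF simple f'_supp, symmetric])
  also have "dirichlet_form V E f' f' = lambda_min V E * interior_inner V E f f"
    using dirichlet_form_cong[of V E f' f f' f] dirichlet_form_eigenvector[OF f_eig]
    by (simp add: f'_def)
  finally show thesis
    using that[of g] g_supp inner interior_inner_self_pos[of V v E f, OF fV v] by (simp add: g_def)
qed

lemma lambda_min_le_if_energy_le:
  assumes twb: "tree_with_boundary V E" and supp: "\<And>v. v \<notin> Defs.interior V E \<Longrightarrow> g v = 0"
    and pos: "interior_inner V E g g > 0"
    and energy: "(\<Sum>(u, w)\<in>arcs E V V. (g u - g w)\<^sup>2) \<le> 2 * \<mu> * interior_inner V E g g"
  shows "lambda_min V E \<le> \<mu>"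
proof -
  have simple: "simple_graph V E" and "finite V" "Defs.interior V E \<noteq> {}"
    using twb unfolding tree_with_boundary_def is_tree_def simple_graph_def by auto
  then have "2 * lambda_min V E * interior_inner V E g g \<le> 2 * dirichlet_form V E g g"
    using lambda_min_le_rayleigh by simp
  also have "\<dots> \<le> 2 * \<mu> * interior_inner V E g g"
    using dirichlet_form_eq_sum_arcs[OF simple supp] energy by simp
  finally show ?thesis using pos by simp
qed

lemma exists_listing_by_decreasing_value:
  fixes g :: "'a \<Rightarrow> real"
  assumes "finite A"
  shows "\<exists>ws. distinct ws \<and> set ws = A \<and> (\<forall>i j. i \<le> j \<longrightarrow> j < length ws \<longrightarrow> g (ws!j) \<le> g (ws!i))"
proof -
  obtain L where L: "distinct L" "set L = A" using finite_distinct_list[OF assms] by blast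
  have "g (sort_key (\<lambda>v. - g v) L ! j) \<le> g (sort_key (\<lambda>v. - g v) L ! i)"
    if "i \<le> j" "j < length L" for i j
    using sorted_nth_mono[OF sorted_sort_key[of "\<lambda>v. - g v" L], of i j] that by simp
  then show ?thesis using L by (intro exI[of _ "sort_key (\<lambda>v. - g v) L"]) auto
qed

theorem lemma6:
  fixes V :: "'a set" and E :: "'a set set"
  assumes "tree_with_boundary V E"
  shows "\<exists>E'. tree_with_boundary V E' \<and> degree_sequence V E' = degree_sequence V E \<and>
           SLO_star_tree V E' \<and> lambda_min V E' \<le> lambda_min V E"
proof -
  let ?I = "Defs.interior V E"
  obtain g where g_nonneg: "\<And>v. g v \<ge> 0" and g_supp: "\<And>v. v \<notin> ?I \<Longrightarrow> g v = 0"
    and g_pos: "interior_inner V E g g > 0"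
    and g_energy: "(\<Sum>(u, w)\<in>arcs E V V. (g u - g w)\<^sup>2) \<le> 2 * lambda_min V E * interior_inner V E g g"
    using lambda_min_abs_eigenvector[OF assms] by blast
  have fV: "finite V" using assms by (simp add: tree_with_boundary_def is_tree_def simple_graph_def)
  then obtain ws where ws: "distinct ws" "set ws = ?I"
    and g_antimono: "\<And>i j. i \<le> j \<Longrightarrow> j < length ws \<Longrightarrow> g (ws!j) \<le> g (ws!i)"
    using exists_listing_by_decreasing_value[of ?I g] by (auto simp: Defs.interior_def)
  obtain E' where E': "tree_with_boundary V E'" "degree_sequence V E' = degree_sequence V E"
    "SLO_star_tree V E'" "Defs.interior V E' = ?I"
    and cuts: "\<And>t s. t \<in> {1..length ws} \<Longrightarrow> s \<in> {1..length ws} \<Longrightarrow>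
      cut_count E' V ws t s \<le> cut_count E V ws t s"
    using SLO_star_rearrangement[OF assms ws] by blast
  have "(\<Sum>(u, w)\<in>arcs E' V V. (g u - g w)\<^sup>2) \<le> (\<Sum>(u, w)\<in>arcs E V V. (g u - g w)\<^sup>2)"
    using ws g_supp g_antimono g_nonneg fV cuts
    by (intro sum_arcs_sq_diff_mono[of ws g]) (auto simp: Defs.interior_def)
  then have "lambda_min V E' \<le> lambda_min V E"
    using g_supp g_pos g_energy E'(4)
    by (intro lambda_min_le_if_energy_le[OF E'(1)]) (auto simp: interior_inner_def)
  then show ?thesis using E' by blast
qed

end
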